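(* Let $N\ge3$, $N=2g+1$ or $N=2g+2$ with $g\ge1$, constants $\alpha_1,\dots,\alpha_N$, $\alpha=\sum\alpha_n$, $\beta_n=\alpha_1+\cdots+\alpha_n$, $Q(\lambda)=(-1)^N\lambda\prod_{n=1}^{N-1}(\lambda+\beta_n)$. Let $v(x)$ satisfy $\dot v=\alpha/2$, and set $b_0=1$, $I_0=2v$ if $N=2g+1$, and $b_0=v$, $I_0=v^2+\sum_{n=1}^{2g+1}\beta_n$ if $N=2g+2$. Let $\lambda_1(x),\dots,\lambda_g(x)$ (pairwise distinct, nonzero for the division below) and $z_1(x),\dots,z_g(x)$ (nonzero) solve $\dot\lambda_j=z_j\,\partial H/\partial z_j$, $\dot z_j=-z_j\,\partial H/\partial\lambda_j$ with $H=\sum_{j}\frac{z_j+Q(\lambda_j)z_j^{-1}-I_0\lambda_j^g}{B'(\lambda_j)}$ ($N$ odd), resp. $H=\sum_{j}\frac{z_j+Q(\lambda_j)z_j^{-1}-2\lambda_j^{g+1}-I_0\lambda_j^g}{B'(\lambda_j)}$ ($N$ even). Define: $B(\lambda)=b_0\prod_{j=1}^g(\lambda-\lambda_j)=b_0\lambda^g+b_1\lambda^{g-1}+\cdots+b_g$; for $\ell=1,\dots,g$, $I_\ell=-\sum_{j=1}^g\frac{z_j+Q(\lambda_j)z_j^{-1}-I_0\lambda_j^g}{B'(\lambda_j)}\frac{\partial b_\ell}{\partial\lambda_j}$ ($N$ odd), resp. with numerator $z_j+Q(\lambda_j)z_j^{-1}-2\lambda_j^{g+1}-I_0\lambda_j^g$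 ($N$ even); $P(\lambda)=I_0\lambda^g+\sum_{\ell=1}^gI_\ell\lambda^{g-\ell}$ ($N$ odd), resp. $P(\lambda)=2\lambda^{g+1}+I_0\lambda^g+\sum_{\ell=1}^g I_\ell\lambda^{g-\ell}$ ($N$ even); $A(\lambda)$ the unique polynomial of the form $a_0\lambda^g+a_1\lambda^{g-1}+\cdots+a_g$ with $a_0=I_0/2$ ($N$ odd), resp. $\lambda^{g+1}+a_0\lambda^g+\cdots+a_g$ with $a_0=\frac12(I_0-\frac{\alpha}{2})$ ($N$ even), such that $A(\lambda_j)=z_j$ for all $j$; $D(\lambda)=P(\lambda)-A(\lambda)$; $C(\lambda)=(A(\lambda)D(\lambda)-Q(\lambda))/B(\lambda)$. Then $C(\lambda)$ is a polynomial, $C(\lambda)=c_0\lambda^{g+1}+c_1\lambda^g+\cdots$, and with $u_1=-\dot a_0+c_1-b_1$ ($N$ odd), resp. $u_1=(-\dot a_0+c_1-b_1)/b_0$ ($N$ even), the functions satisfy $\dot A=C-B(\lambda+u_1)$, $\dot B=D-A$, $\dot C=(\lambda+\alpha+u_1)A-D(\lambda+u_1)$, $\dot D=(\lambda+\alpha+u_1)B-C$; i.e. $T(\lambda)=\begin{pmatrix}A&B\\C&D\end{pmatrix}$ satisfies $\dot T(\lambda)=U_1(\lambda+\alpha)T(\lambda)-T(\lambda)U_1(\lambda)$ with $U_1(\lambda)=\begin{pmatrix}0&1\\ \lambda+u_1&0\end{pmatrix}$.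
   Context: Dot denotes $d/dx$; $B'(\lambda_j)=b_0\prod_{k\ne j}(\lambda_j-\lambda_k)$, and the coefficients $b_\ell$ of $B$ are regarded as functions of $\lambda_1,\dots,\lambda_g$ (and $b_0$). This is the reconstruction of the transition matrix of the periodic dressing chain (whose Lax equation is $\dot T=U_1(\lambda+\alpha)T-TU_1(\lambda)$) from its spectral Hamiltonian system. *)

theory Defs
  imports "HOL-Analysis.Analysis" "HOL-Computational_Algebra.Polynomial"
begin

text \<open>Periodic dressing chain with period N, N = 2g+1 or N = 2g+2.
 Indices: alpha_n for n = 1..N; lambda_j, z_j for j = 0..g-1 (0-based).\<close>

definition alpha_tot :: "nat \<Rightarrow> (nat \<Rightarrow> complex) \<Rightarrow> complex" where
  "alpha_tot N al = (\<Sum>n=1..N. al n)"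

definition betaN :: "(nat \<Rightarrow> complex) \<Rightarrow> nat \<Rightarrow> complex" where
  "betaN al n = (\<Sum>k=1..n. al k)"

definition Qpoly :: "nat \<Rightarrow> (nat \<Rightarrow> complex) \<Rightarrow> complex poly" where
  "Qpoly N al = smult ((-1)^N) ([:0, 1:] * (\<Prod>n\<in>{1..N-1}. [:betaN al n, 1:]))"

definition b0fun :: "nat \<Rightarrow> complex \<Rightarrow> complex" where
  "b0fun N v = (if odd N then 1 else v)"

definition I0fun :: "nat \<Rightarrow> nat \<Rightarrow> (nat \<Rightarrow> complex) \<Rightarrow> complex \<Rightarrow> complex" where
  "I0fun N g al v = (if odd N then 2 * v else v^2 + (\<Sum>n=1..2*g+1. betaN al n))"

definition Bpoly :: "nat \<Rightarrow> complex \<Rightarrow> (nat \<Rightarrow> complex) \<Rightarrow> complex poly" where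
  "Bpoly g b0 lam = smult b0 (\<Prod>j<g. [:- lam j, 1:])"

definition bcoef :: "nat \<Rightarrow> complex \<Rightarrow> (nat \<Rightarrow> complex) \<Rightarrow> nat \<Rightarrow> complex" where
  "bcoef g b0 lam l = coeff (Bpoly g b0 lam) (g - l)"

definition Bprime :: "nat \<Rightarrow> complex \<Rightarrow> (nat \<Rightarrow> complex) \<Rightarrow> nat \<Rightarrow> complex" where
  "Bprime g b0 lam j = b0 * (\<Prod>k\<in>{..<g} - {j}. lam j - lam k)"

definition numer :: "nat \<Rightarrow> nat \<Rightarrow> (nat \<Rightarrow> complex) \<Rightarrow> complex \<Rightarrow> (nat \<Rightarrow> complex)
    \<Rightarrow> (nat \<Rightarrow> complex) \<Rightarrow> nat \<Rightarrow> complex" where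
  "numer N g al I0 lam z j =
     z j + poly (Qpoly N al) (lam j) / z j
     - (if odd N then 0 else 2 * lam j ^ (g+1)) - I0 * lam j ^ g"

definition Ham :: "nat \<Rightarrow> nat \<Rightarrow> (nat \<Rightarrow> complex) \<Rightarrow> complex \<Rightarrow> complex \<Rightarrow> (nat \<Rightarrow> complex)
    \<Rightarrow> (nat \<Rightarrow> complex) \<Rightarrow> complex" where
  "Ham N g al b0 I0 lam z = (\<Sum>j<g. numer N g al I0 lam z j / Bprime g b0 lam j)"

definition dH_dz :: "nat \<Rightarrow> nat \<Rightarrow> (nat \<Rightarrow> complex) \<Rightarrow> complex \<Rightarrow> complex \<Rightarrow> (nat \<Rightarrow> complex)
    \<Rightarrow> (nat \<Rightarrow> complex) \<Rightarrow> nat \<Rightarrow> complex" where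
  "dH_dz N g al b0 I0 lam z j = deriv (\<lambda>t. Ham N g al b0 I0 lam (z(j := t))) (z j)"

definition dH_dlam :: "nat \<Rightarrow> nat \<Rightarrow> (nat \<Rightarrow> complex) \<Rightarrow> complex \<Rightarrow> complex \<Rightarrow> (nat \<Rightarrow> complex)
    \<Rightarrow> (nat \<Rightarrow> complex) \<Rightarrow> nat \<Rightarrow> complex" where
  "dH_dlam N g al b0 I0 lam z j = deriv (\<lambda>t. Ham N g al b0 I0 (lam(j := t)) z) (lam j)"

definition Icoef :: "nat \<Rightarrow> nat \<Rightarrow> (nat \<Rightarrow> complex) \<Rightarrow> complex \<Rightarrow> complex \<Rightarrow> (nat \<Rightarrow> complex)
    \<Rightarrow> (nat \<Rightarrow> complex) \<Rightarrow> nat \<Rightarrow> complex" where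
  "Icoef N g al b0 I0 lam z l =
     - (\<Sum>j<g. numer N g al I0 lam z j / Bprime g b0 lam j
                * deriv (\<lambda>t. bcoef g b0 (lam(j := t)) l) (lam j))"

definition Ppoly :: "nat \<Rightarrow> nat \<Rightarrow> (nat \<Rightarrow> complex) \<Rightarrow> complex \<Rightarrow> complex \<Rightarrow> (nat \<Rightarrow> complex)
    \<Rightarrow> (nat \<Rightarrow> complex) \<Rightarrow> complex poly" where
  "Ppoly N g al b0 I0 lam z =
     (if odd N then 0 else monom 2 (g+1)) + monom I0 g
     + (\<Sum>l=1..g. monom (Icoef N g al b0 I0 lam z l) (g - l))"

definition Apoly :: "nat \<Rightarrow> nat \<Rightarrow> (nat \<Rightarrow> complex) \<Rightarrow> complex \<Rightarrow> (nat \<Rightarrow> complex)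
    \<Rightarrow> (nat \<Rightarrow> complex) \<Rightarrow> complex poly" where
  "Apoly N g al I0 lam z = (THE p.
     (if odd N then degree p \<le> g \<and> coeff p g = I0 / 2
      else degree p \<le> g + 1 \<and> coeff p (g+1) = 1 \<and> coeff p g = (I0 - alpha_tot N al / 2) / 2)
     \<and> (\<forall>j<g. poly p (lam j) = z j))"

definition Bx :: "nat \<Rightarrow> nat \<Rightarrow> (real \<Rightarrow> complex) \<Rightarrow> (real \<Rightarrow> nat \<Rightarrow> complex) \<Rightarrow> real \<Rightarrow> complex poly" where
  "Bx N g v lam x = Bpoly g (b0fun N (v x)) (lam x)"

definition Ax :: "nat \<Rightarrow> nat \<Rightarrow> (nat \<Rightarrow> complex) \<Rightarrow> (real \<Rightarrow> complex) \<Rightarrow> (real \<Rightarrow> nat \<Rightarrow> complex)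
    \<Rightarrow> (real \<Rightarrow> nat \<Rightarrow> complex) \<Rightarrow> real \<Rightarrow> complex poly" where
  "Ax N g al v lam z x = Apoly N g al (I0fun N g al (v x)) (lam x) (z x)"

definition Px :: "nat \<Rightarrow> nat \<Rightarrow> (nat \<Rightarrow> complex) \<Rightarrow> (real \<Rightarrow> complex) \<Rightarrow> (real \<Rightarrow> nat \<Rightarrow> complex)
    \<Rightarrow> (real \<Rightarrow> nat \<Rightarrow> complex) \<Rightarrow> real \<Rightarrow> complex poly" where
  "Px N g al v lam z x = Ppoly N g al (b0fun N (v x)) (I0fun N g al (v x)) (lam x) (z x)"

definition Dx :: "nat \<Rightarrow> nat \<Rightarrow> (nat \<Rightarrow> complex) \<Rightarrow> (real \<Rightarrow> complex) \<Rightarrow> (real \<Rightarrow> nat \<Rightarrow> complex)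
    \<Rightarrow> (real \<Rightarrow> nat \<Rightarrow> complex) \<Rightarrow> real \<Rightarrow> complex poly" where
  "Dx N g al v lam z x = Px N g al v lam z x - Ax N g al v lam z x"

text \<open>C = (A D - Q) / B (exact division when B divides A D - Q)\<close>
definition Cx :: "nat \<Rightarrow> nat \<Rightarrow> (nat \<Rightarrow> complex) \<Rightarrow> (real \<Rightarrow> complex) \<Rightarrow> (real \<Rightarrow> nat \<Rightarrow> complex)
    \<Rightarrow> (real \<Rightarrow> nat \<Rightarrow> complex) \<Rightarrow> real \<Rightarrow> complex poly" where
  "Cx N g al v lam z x =
     (Ax N g al v lam z x * Dx N g al v lam z x - Qpoly N al) div Bx N g v lam x"

definition u1x :: "nat \<Rightarrow> nat \<Rightarrow> (nat \<Rightarrow> complex) \<Rightarrow> (real \<Rightarrow> complex) \<Rightarrow> (real \<Rightarrow> nat \<Rightarrow> complex)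
    \<Rightarrow> (real \<Rightarrow> nat \<Rightarrow> complex) \<Rightarrow> real \<Rightarrow> complex" where
  "u1x N g al v lam z x =
     (- vector_derivative (\<lambda>y. coeff (Ax N g al v lam z y) g) (at x)
      + coeff (Cx N g al v lam z x) g - coeff (Bx N g v lam x) (g - 1))
     / (if odd N then 1 else b0fun N (v x))"

end

theory Submission
  imports Defs
begin

(* Everything is checked at a fixed x, where each x-derivative of A, B, C, D, P is a polynomial
   of degree at most g + 1 (it exists because the values of the family at g + 2 fixed points are
   differentiable and determine it linearly) and is therefore determined by its two top
   coefficients and its values at the g distinct nodes lambda_j.
   The interpolation data give A(lambda_j) = z_j and P(lambda_j) = z_j + Q(lambda_j)/z_j, so
   A D - Q vanishes at the roots of B and C is a polynomial. Hamilton's equations read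
   B'(lambda_j) lambda_j^. = z_j - Q(lambda_j)/z_j and B'(lambda_j) z_j^. = z_j P'(lambda_j) - Q'(lambda_j)
   (dot = d/dx, prime = d/dlambda). Differentiating B(lambda_j) = 0, A(lambda_j) = z_j and
   P(lambda_j) z_j = z_j^2 + Q(lambda_j) along the flow gives B^. = D - A, P^. = alpha B and
   A^. = C - B (lambda + u_1) at the nodes, the top coefficients match by direct computation,
   and differentiating B C = A D - Q then yields C^. and D^. = P^. - A^. . *)

section \<open>Polynomial algebra and Lagrange interpolation\<close>

lemma poly_eqI_high_coeffs:
  fixes p q :: "'a::{comm_ring_1,ring_no_zero_divisors} poly"
  assumes "finite A" and high: "\<And>i. card A \<le> i \<Longrightarrow> coeff p i = coeff q i"
    and nodes: "\<And>x. x \<in> A \<Longrightarrow> poly p x = poly q x"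
  shows "p = q"
proof (cases "card A = 0")
  case True
  then show ?thesis using high by (auto intro: poly_eqI)
next
  case False
  have "degree (p - q) < card A"
    using False high by (intro degree_lessI) auto
  then have "p - q = 0"
    using nodes by (intro poly_eqI_degree[of A]) auto
  then show ?thesis by simp
qed

lemma degree_prod_linear_le:
  "degree (\<Prod>i\<in>J. [:c i, 1::'a::comm_semiring_1:]) \<le> card J"
proof (cases "finite J")
  case True
  show ?thesis
    by (rule order.trans[OF degree_prod_sum_le[OF True]]) simp
qed simp

lemma monic_prod_linear_coeffs:
  fixes c :: "'b \<Rightarrow> 'a::comm_ring_1"
  assumes "finite A" "A \<noteq> {}"
  shows "degree (\<Prod>n\<in>A. [:c n, 1:]) = card A" "coeff (\<Prod>n\<in>A. [:c n, 1:]) (card A) = 1"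
    "coeff (\<Prod>n\<in>A. [:c n, 1:]) (card A - 1) = (\<Sum>n\<in>A. c n)"
proof -
  have "degree (\<Prod>n\<in>A. [:c n, 1:]) = card A \<and> coeff (\<Prod>n\<in>A. [:c n, 1:]) (card A) = 1
     \<and> coeff (\<Prod>n\<in>A. [:c n, 1:]) (card A - 1) = (\<Sum>n\<in>A. c n)"
    using assms
  proof (induction A rule: finite_ne_induct)
    case (insert a A)
    define P where "P = (\<Prod>n\<in>A. [:c n, 1:])"
    obtain m where m: "card A = Suc m" using insert.hyps by (cases "card A") auto
    have IH: "degree P = Suc m" "coeff P (Suc m) = 1" "coeff P m = (\<Sum>n\<in>A. c n)"
      using insert.IH m by (auto simp: P_def)
    have prod: "(\<Prod>n\<in>insert a A. [:c n, 1:]) = smult (c a) P + pCons 0 P"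
      using insert.hyps by (simp add: P_def mult_pCons_left)
    have top: "coeff (smult (c a) P + pCons 0 P) (Suc (Suc m)) = 1"
      using IH by (simp add: coeff_eq_0)
    have "degree (smult (c a) P + pCons 0 P) \<le> Suc (Suc m)"
      using IH by (intro degree_add_le) (auto intro: order.trans[OF degree_smult_le])
    moreover have "Suc (Suc m) \<le> degree (smult (c a) P + pCons 0 P)"
      by (rule le_degree) (use top in simp)
    ultimately show ?case
      using insert.hyps m IH top by (simp add: prod)
  qed simp
  then show "degree (\<Prod>n\<in>A. [:c n, 1:]) = card A" "coeff (\<Prod>n\<in>A. [:c n, 1:]) (card A) = 1"
    "coeff (\<Prod>n\<in>A. [:c n, 1:]) (card A - 1) = (\<Sum>n\<in>A. c n)" by auto
qed

lemma prod_linear_dvd: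
  fixes p :: "'a::idom poly"
  assumes "finite J" "inj_on xs J" "\<And>j. j \<in> J \<Longrightarrow> poly p (xs j) = 0"
  shows "(\<Prod>j\<in>J. [:- xs j, 1:]) dvd p"
  using assms
proof (induction J rule: finite_induct)
  case (insert a J)
  then obtain q where q: "p = (\<Prod>j\<in>J. [:- xs j, 1:]) * q"
    by (auto simp: inj_on_insert elim: dvdE)
  have "(\<Prod>j\<in>J. xs a - xs j) \<noteq> 0"
    using insert.hyps insert.prems by (auto simp: prod_zero_iff inj_on_def)
  then have "poly q (xs a) = 0"
    using insert.prems(2)[of a] by (simp add: q poly_prod)
  then have "[:- xs a, 1:] dvd q" by (simp add: poly_eq_0_iff_dvd)
  then have "[:- xs a, 1:] * (\<Prod>j\<in>J. [:- xs j, 1:]) dvd q * (\<Prod>j\<in>J. [:- xs j, 1:])"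
    by (rule mult_dvd_mono) simp
  then show ?case
    using insert.hyps by (simp add: q mult.commute)
qed simp

lemma poly_pderiv_linear_mult_at_root:
  "poly (pderiv ([:- a, 1:] * q)) a = poly q (a::'a::idom)"
  by (simp only: pderiv_mult poly_mult poly_add) (simp add: pderiv_pCons)

lemma pderiv_sum: "pderiv (\<Sum>k\<in>I. f k) = (\<Sum>k\<in>I. pderiv (f k))"
  using higher_pderiv_sum[of 1 f I] by simp

lemma smult_sum_right: "smult c (\<Sum>i\<in>A. f i) = (\<Sum>i\<in>A. smult c (f i))"
  by (induct A rule: infinite_finite_induct) (simp_all add: smult_add_right)

lemma coeff_mult_degree_bounds:
  fixes p q :: "'a::comm_semiring_0 poly"
  assumes "degree p \<le> a" "degree q \<le> b"
  shows "coeff (p * q) (a + b) = coeff p a * coeff q b"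
proof -
  have "coeff (p * q) (a + b) = (\<Sum>i\<le>a+b. coeff p i * coeff q (a + b - i))" by (rule coeff_mult)
  also have "\<dots> = (\<Sum>i\<in>{a}. coeff p i * coeff q (a + b - i))"
  proof (intro sum.mono_neutral_right ballI)
    fix i assume "i \<in> {..a + b} - {a}"
    then have "i > a \<or> a + b - i > b" by auto
    then show "coeff p i * coeff q (a + b - i) = 0" using assms by (auto simp: coeff_eq_0)
  qed auto
  finally show ?thesis by simp
qed

lemma coeff_mult_below_degree_bounds:
  fixes p q :: "'a::comm_semiring_0 poly"
  assumes "degree p \<le> a + 1" "degree q \<le> b + 1"
  shows "coeff (p * q) (a + b + 1) = coeff p (a + 1) * coeff q b + coeff p a * coeff q (b + 1)"
proof -
  have "coeff (p * q) (a + b + 1) = (\<Sum>i\<le>a+b+1. coeff p i * coeff q (a + b + 1 - i))"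
    by (rule coeff_mult)
  also have "\<dots> = (\<Sum>i\<in>{a, a+1}. coeff p i * coeff q (a + b + 1 - i))"
  proof (intro sum.mono_neutral_right ballI)
    fix i assume "i \<in> {..a + b + 1} - {a, a + 1}"
    then have "i > a + 1 \<or> a + b + 1 - i > b + 1" by auto
    then show "coeff p i * coeff q (a + b + 1 - i) = 0" using assms by (auto simp: coeff_eq_0)
  qed auto
  finally show ?thesis by (simp add: add.commute)
qed

definition lagrange_basis :: "('b \<Rightarrow> 'a::field) \<Rightarrow> 'b set \<Rightarrow> 'b \<Rightarrow> 'a poly" where
  "lagrange_basis xs I k = smult (1 / (\<Prod>i\<in>I-{k}. xs k - xs i)) (\<Prod>i\<in>I-{k}. [:- xs i, 1:])"

lemma poly_lagrange_basis:
  "poly (lagrange_basis xs I k) w = (\<Prod>i\<in>I-{k}. w - xs i) / (\<Prod>i\<in>I-{k}. xs k - xs i)"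
  by (simp add: lagrange_basis_def poly_prod)

lemma poly_lagrange_basis_self:
  assumes "finite I" "inj_on xs I" "k \<in> I"
  shows "poly (lagrange_basis xs I k) (xs k) = 1"
  using assms by (auto simp: poly_lagrange_basis prod_zero_iff inj_on_def)

lemma poly_lagrange_basis_other:
  assumes "finite I" "i \<in> I" "k \<noteq> i"
  shows "poly (lagrange_basis xs I k) (xs i) = 0"
  using assms by (auto simp: poly_lagrange_basis prod_zero_iff)

lemma degree_lagrange_basis:
  assumes "finite I" "k \<in> I"
  shows "degree (lagrange_basis xs I k) \<le> card I - 1"
  using degree_prod_linear_le[of "\<lambda>i. - xs i" "I - {k}"] assms
  by (simp add: lagrange_basis_def)

lemma degree_lagrange_sum:
  assumes "finite I" "I \<noteq> {}"
  shows "degree (\<Sum>k\<in>I. smult (c k) (lagrange_basis xs I k)) < card I"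
proof -
  have "degree (\<Sum>k\<in>I. smult (c k) (lagrange_basis xs I k)) \<le> card I - 1"
    using assms(1) degree_lagrange_basis[OF assms(1)]
    by (intro degree_sum_le) (auto intro: order.trans[OF degree_smult_le])
  moreover have "card I > 0" using assms by auto
  ultimately show ?thesis by linarith
qed

lemma poly_lagrange_sum_node:
  assumes "finite I" "inj_on xs I" "i \<in> I"
  shows "poly (\<Sum>k\<in>I. smult (c k) (lagrange_basis xs I k)) (xs i) = c i"
proof -
  have "poly (\<Sum>k\<in>I. smult (c k) (lagrange_basis xs I k)) (xs i)
      = (\<Sum>k\<in>I. c k * poly (lagrange_basis xs I k) (xs i))"
    by (simp add: poly_sum)
  also have "\<dots> = c i * poly (lagrange_basis xs I i) (xs i)"
  proof -
    have "(\<Sum>k\<in>I-{i}. c k * poly (lagrange_basis xs I k) (xs i)) = 0"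
      using poly_lagrange_basis_other[OF assms(1,3)] by (intro sum.neutral) auto
    then show ?thesis by (simp add: sum.remove[OF assms(1,3)])
  qed
  finally show ?thesis using poly_lagrange_basis_self[OF assms] by simp
qed

lemma lagrange_interpolation:
  fixes p :: "'a::field poly"
  assumes "finite I" "inj_on xs I" "degree p < card I"
  shows "p = (\<Sum>k\<in>I. smult (poly p (xs k)) (lagrange_basis xs I k))"
proof (rule poly_eqI_degree[of "xs ` I"])
  have "I \<noteq> {}" using assms(3) by auto
  then show "card (xs ` I) > degree p"
    "card (xs ` I) > degree (\<Sum>k\<in>I. smult (poly p (xs k)) (lagrange_basis xs I k))"
    using assms degree_lagrange_sum[OF assms(1) \<open>I \<noteq> {}\<close>, of "\<lambda>k. poly p (xs k)" xs]
    by (simp_all add: card_image)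
next
  fix y assume "y \<in> xs ` I"
  then obtain i where "i \<in> I" "y = xs i" by blast
  then show "poly p y = poly (\<Sum>k\<in>I. smult (poly p (xs k)) (lagrange_basis xs I k)) y"
    using poly_lagrange_sum_node[OF assms(1,2)] by simp
qed

lemma poly_pderiv_lagrange_basis_other:
  assumes "finite I" "j \<in> I" "j \<noteq> k"
  shows "poly (pderiv (lagrange_basis xs I k)) (xs j)
    = (\<Prod>i\<in>I-{k}-{j}. xs j - xs i) / (\<Prod>i\<in>I-{k}. xs k - xs i)"
proof -
  have "(\<Prod>i\<in>I-{k}. [:- xs i, 1:]) = [:- xs j, 1:] * (\<Prod>i\<in>I-{k}-{j}. [:- xs i, 1:])"
    using assms by (subst prod.remove[of _ j]) auto
  then have "poly (pderiv (\<Prod>i\<in>I-{k}. [:- xs i, 1:])) (xs j) = poly (\<Prod>i\<in>I-{k}-{j}. [:- xs i, 1:]) (xs j)"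
    by (simp only: poly_pderiv_linear_mult_at_root)
  then show ?thesis
    by (simp add: lagrange_basis_def pderiv_smult poly_prod)
qed

section \<open>Polynomials depending on a real parameter\<close>

lemma differentiable_prod:
  fixes f :: "'b \<Rightarrow> real \<Rightarrow> 'a::real_normed_field"
  assumes "\<And>i. i \<in> A \<Longrightarrow> f i differentiable (at x)"
  shows "(\<lambda>y. \<Prod>i\<in>A. f i y) differentiable (at x)"
  using assms
  by (induction A rule: infinite_finite_induct) (auto intro: differentiable_mult)

lemma differentiable_poly_compose:
  fixes f :: "real \<Rightarrow> 'a::real_normed_field"
  assumes "f differentiable (at x)"
  shows "(\<lambda>y. poly p (f y)) differentiable (at x)"
proof -
  have "(\<lambda>w. poly p w) differentiable (at (f x))"
    using poly_DERIV[of p "f x"] field_differentiable_imp_differentiable field_differentiable_def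
    by blast
  then show ?thesis using differentiable_compose[OF _ assms] by blast
qed

lemma differentiable_transform_within_open:
  fixes f h :: "real \<Rightarrow> 'a::real_normed_vector"
  assumes "f differentiable (at x)" "open T" "x \<in> T" "\<And>y. y \<in> T \<Longrightarrow> f y = h y"
  shows "h differentiable (at x)"
proof -
  have "(f has_vector_derivative vector_derivative f (at x)) (at x)"
    using assms(1) vector_derivative_works by blast
  then have "(h has_vector_derivative vector_derivative f (at x)) (at x)"
    by (rule has_vector_derivative_transform_within_open[OF _ assms(2,3)]) (use assms(4) in auto)
  then show ?thesis by (rule differentiableI_vector)
qed

lemma vector_derivative_eq_on_open:
  fixes f h :: "real \<Rightarrow> 'a::real_normed_vector"
  assumes "(f has_vector_derivative a) (at x)" "(h has_vector_derivative b) (at x)"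
    and "open T" "x \<in> T" "\<And>y. y \<in> T \<Longrightarrow> f y = h y"
  shows "a = b"
proof -
  have "(h has_vector_derivative a) (at x)"
    by (rule has_vector_derivative_transform_within_open[OF assms(1) assms(3,4)]) (use assms(5) in auto)
  then show ?thesis using assms(2) vector_derivative_unique_at by blast
qed

definition has_poly_derivative :: "(real \<Rightarrow> 'a::real_normed_field poly) \<Rightarrow> 'a poly \<Rightarrow> real \<Rightarrow> bool" where
  "has_poly_derivative p p' x \<longleftrightarrow>
     (\<forall>\<mu>. ((\<lambda>y. poly (p y) \<mu>) has_vector_derivative poly p' \<mu>) (at x))"

lemma has_poly_derivative_unique:
  fixes p :: "real \<Rightarrow> 'a::real_normed_field poly"
  assumes "has_poly_derivative p a x" "has_poly_derivative p b x"
  shows "a = b"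
proof -
  have "poly a = poly b"
    using assms vector_derivative_unique_at unfolding has_poly_derivative_def by blast
  then show ?thesis by (simp add: poly_eq_poly_eq_iff)
qed

lemma has_poly_derivative_diff:
  "has_poly_derivative p a x \<Longrightarrow> has_poly_derivative q b x \<Longrightarrow>
     has_poly_derivative (\<lambda>y. p y - q y) (a - b) x"
  unfolding has_poly_derivative_def by (simp add: has_vector_derivative_diff)

lemma has_poly_derivative_mult:
  assumes "has_poly_derivative p a x" "has_poly_derivative q b x"
  shows "has_poly_derivative (\<lambda>y. p y * q y) (p x * b + a * q x) x"
  using assms unfolding has_poly_derivative_def
  by (auto intro!: has_vector_derivative_mult[THEN has_vector_derivative_eq_rhs] simp: poly_mult)

lemma has_poly_derivative_const: "has_poly_derivative (\<lambda>y. c) 0 x"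
  unfolding has_poly_derivative_def by simp

lemma has_poly_derivative_transform_within_open:
  assumes "has_poly_derivative p a x" "open T" "x \<in> T" "\<And>y. y \<in> T \<Longrightarrow> p y = q y"
  shows "has_poly_derivative q a x"
  using assms unfolding has_poly_derivative_def
  by (auto intro: has_vector_derivative_transform_within_open[OF _ assms(2,3)])

lemma has_vector_derivative_poly_lincomb:
  fixes e :: "'b \<Rightarrow> 'a::real_normed_field poly"
  assumes "finite I" "\<And>k. k \<in> I \<Longrightarrow> (d k has_vector_derivative d' k) (at x)"
    and s: "(s has_vector_derivative s') (at x)"
  shows "((\<lambda>y. poly (\<Sum>k\<in>I. smult (d k y) (e k)) (s y)) has_vector_derivative
      poly (\<Sum>k\<in>I. smult (d' k) (e k)) (s x)
      + poly (pderiv (\<Sum>k\<in>I. smult (d k x) (e k))) (s x) * s') (at x)"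
proof -
  have e: "((\<lambda>y. poly (e k) (s y)) has_vector_derivative s' * poly (pderiv (e k)) (s x)) (at x)" for k
    using field_vector_diff_chain_at[OF s poly_DERIV] by (simp add: o_def)
  have "((\<lambda>y. \<Sum>k\<in>I. d k y * poly (e k) (s y)) has_vector_derivative
      (\<Sum>k\<in>I. d k x * (s' * poly (pderiv (e k)) (s x)) + d' k * poly (e k) (s x))) (at x)"
    using assms(2) by (intro has_vector_derivative_sum has_vector_derivative_mult e)
  then show ?thesis
    by (simp add: poly_sum pderiv_sum pderiv_smult sum.distrib sum_distrib_left sum_distrib_right
        algebra_simps)
qed

lemma has_vector_derivative_poly_compose:
  fixes p :: "real \<Rightarrow> 'a::real_normed_field poly"
  assumes T: "open T" "x \<in> T" and deg: "\<And>y. y \<in> T \<Longrightarrow> degree (p y) \<le> n" "degree p' \<le> n"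
    and coeffs: "\<And>i. ((\<lambda>y. coeff (p y) i) has_vector_derivative coeff p' i) (at x)"
    and s: "(s has_vector_derivative s') (at x)"
  shows "((\<lambda>y. poly (p y) (s y)) has_vector_derivative
      poly p' (s x) + poly (pderiv (p x)) (s x) * s') (at x)"
proof -
  have monoms: "q = (\<Sum>i\<le>n. smult (coeff q i) (monom 1 i))" if "degree q \<le> n" for q :: "'a poly"
    using poly_as_sum_of_monoms'[OF that] by (simp add: smult_monom)
  have "((\<lambda>y. poly (\<Sum>i\<le>n. smult (coeff (p y) i) (monom 1 i)) (s y)) has_vector_derivative
      poly (\<Sum>i\<le>n. smult (coeff p' i) (monom 1 i)) (s x)
      + poly (pderiv (\<Sum>i\<le>n. smult (coeff (p x) i) (monom 1 i))) (s x) * s') (at x)"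
    by (rule has_vector_derivative_poly_lincomb) (use coeffs s in auto)
  then have "((\<lambda>y. poly (\<Sum>i\<le>n. smult (coeff (p y) i) (monom 1 i)) (s y)) has_vector_derivative
      poly p' (s x) + poly (pderiv (p x)) (s x) * s') (at x)"
    by (simp flip: monoms[OF deg(2)] monoms[OF deg(1)[OF T(2)]])
  then show ?thesis
    by (rule has_vector_derivative_transform_within_open[OF _ T]) (simp flip: monoms[OF deg(1)])
qed

lemma coeff_derivatives_from_nodes:
  fixes p :: "real \<Rightarrow> 'a::real_normed_field poly"
  assumes T: "open T" "x \<in> T" and deg: "\<And>y. y \<in> T \<Longrightarrow> degree (p y) \<le> n"
    and X: "finite X" "card X = Suc n"
    and dif: "\<And>\<mu>. \<mu> \<in> X \<Longrightarrow> (\<lambda>y. poly (p y) \<mu>) differentiable (at x)"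
  obtains p' where "degree p' \<le> n"
    "\<And>i. ((\<lambda>y. coeff (p y) i) has_vector_derivative coeff p' i) (at x)"
proof
  define d where "d \<mu> = vector_derivative (\<lambda>y. poly (p y) \<mu>) (at x)" for \<mu>
  define p' where "p' = (\<Sum>\<mu>\<in>X. smult (d \<mu>) (lagrange_basis id X \<mu>))"
  show "degree p' \<le> n"
  proof -
    have "X \<noteq> {}" using X by auto
    then show ?thesis using degree_lagrange_sum[OF X(1), of d id] X(2) by (simp add: p'_def)
  qed
  fix i
  have "((\<lambda>y. \<Sum>\<mu>\<in>X. poly (p y) \<mu> * coeff (lagrange_basis id X \<mu>) i) has_vector_derivative
      coeff p' i) (at x)"
    unfolding p'_def coeff_sum coeff_smult d_def
    using dif by (intro has_vector_derivative_sum has_vector_derivative_mult_left)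
      (simp add: vector_derivative_works)
  then show "((\<lambda>y. coeff (p y) i) has_vector_derivative coeff p' i) (at x)"
  proof (rule has_vector_derivative_transform_within_open[OF _ T])
    fix y assume "y \<in> T"
    then have "p y = (\<Sum>\<mu>\<in>X. smult (poly (p y) \<mu>) (lagrange_basis id X \<mu>))"
      using lagrange_interpolation[OF X(1), of id "p y"] deg X(2) by fastforce
    then show "(\<Sum>\<mu>\<in>X. poly (p y) \<mu> * coeff (lagrange_basis id X \<mu>) i) = coeff (p y) i"
      by (metis (no_types, lifting) coeff_smult coeff_sum sum.cong)
  qed
qed

lemma polynomial_family_derivative:
  fixes p :: "real \<Rightarrow> 'a::real_normed_field poly"
  assumes T: "open T" "x \<in> T" and deg: "\<And>y. y \<in> T \<Longrightarrow> degree (p y) \<le> n"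
    and X: "finite X" "card X = Suc n"
    and dif: "\<And>\<mu>. \<mu> \<in> X \<Longrightarrow> (\<lambda>y. poly (p y) \<mu>) differentiable (at x)"
  obtains p' where "degree p' \<le> n" "has_poly_derivative p p' x"
    "\<And>i. ((\<lambda>y. coeff (p y) i) has_vector_derivative coeff p' i) (at x)"
    "\<And>s s'. (s has_vector_derivative s') (at x) \<Longrightarrow>
       ((\<lambda>y. poly (p y) (s y)) has_vector_derivative poly p' (s x) + poly (pderiv (p x)) (s x) * s') (at x)"
proof -
  obtain p' where p': "degree p' \<le> n"
    "\<And>i. ((\<lambda>y. coeff (p y) i) has_vector_derivative coeff p' i) (at x)"
    using coeff_derivatives_from_nodes[OF T deg X dif] by blast
  note chain = has_vector_derivative_poly_compose[OF T deg p']
  have "has_poly_derivative p p' x"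
    unfolding has_poly_derivative_def using chain[of "\<lambda>_. \<mu>" 0 for \<mu>] by simp
  with p' chain show ?thesis using that by blast
qed

lemma finite_set_avoiding:
  assumes "finite F" "infinite (UNIV :: 'a set)"
  obtains X :: "'a set" where "finite X" "card X = n" "X \<inter> F = {}"
proof -
  have "infinite (- F)" using assms by auto
  then obtain X where "finite X" "card X = n" "X \<subseteq> - F"
    using infinite_arbitrarily_large by blast
  then show ?thesis using that by blast
qed

section \<open>The Hamiltonian and the interpolation data\<close>

lemma Qpoly_coeffs:
  assumes "N \<ge> 2"
  shows "degree (Qpoly N al) = N" "coeff (Qpoly N al) N = (-1)^N"
    "coeff (Qpoly N al) (N - 1) = (-1)^N * (\<Sum>n=1..N-1. betaN al n)"
proof -
  define P where "P = (\<Prod>n\<in>{1..N-1}. [:betaN al n, 1:])"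
  obtain k where k: "N = Suc (Suc k)" using assms by (metis add_2_eq_Suc le_Suc_ex)
  have P: "degree P = Suc k" "coeff P (Suc k) = 1" "coeff P k = (\<Sum>n=1..N-1. betaN al n)"
    using monic_prod_linear_coeffs[of "{1..N-1}" "betaN al"] by (simp_all add: P_def k)
  have Q: "Qpoly N al = smult ((-1)^N) (pCons 0 P)" by (simp add: Qpoly_def P_def)
  show "degree (Qpoly N al) = N" "coeff (Qpoly N al) N = (-1)^N"
    "coeff (Qpoly N al) (N - 1) = (-1)^N * (\<Sum>n=1..N-1. betaN al n)"
    unfolding Q using P by (auto simp: k)
qed

definition B_cofactor :: "nat \<Rightarrow> (nat \<Rightarrow> complex) \<Rightarrow> nat \<Rightarrow> complex poly" where
  "B_cofactor g lam j = (\<Prod>i\<in>{..<g}-{j}. [:- lam i, 1:])"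

lemma degree_B_cofactor: "j < g \<Longrightarrow> degree (B_cofactor g lam j) \<le> g - 1"
  using degree_prod_linear_le[of "\<lambda>i. - lam i" "{..<g}-{j}"] by (simp add: B_cofactor_def)

lemma lagrange_basis_eq_B_cofactor:
  "lagrange_basis lam {..<g} j = smult (1 / poly (B_cofactor g lam j) (lam j)) (B_cofactor g lam j)"
  by (simp add: lagrange_basis_def B_cofactor_def poly_prod)

lemma prod_linear_split:
  "j < g \<Longrightarrow> (\<Prod>i<g. [:- lam i, 1:]) = [:- lam j, 1:] * B_cofactor g lam j"
  unfolding B_cofactor_def by (subst prod.remove[of "{..<g}" j]) auto

lemma Bpoly_upd:
  assumes "j < g"
  shows "Bpoly g b0 (lam(j := t)) = smult b0 ([:- t, 1:] * B_cofactor g lam j)"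
proof -
  have "B_cofactor g (lam(j := t)) j = B_cofactor g lam j"
    unfolding B_cofactor_def by (rule prod.cong) auto
  then show ?thesis
    using prod_linear_split[OF assms, of "lam(j := t)"] by (simp add: Bpoly_def)
qed

lemma deriv_bcoef:
  assumes "j < g"
  shows "deriv (\<lambda>t. bcoef g b0 (lam(j := t)) l) (lam j) = - b0 * coeff (B_cofactor g lam j) (g - l)"
proof -
  have "(\<lambda>t. bcoef g b0 (lam(j := t)) l) =
      (\<lambda>t. b0 * (- t * coeff (B_cofactor g lam j) (g - l) + coeff (pCons 0 (B_cofactor g lam j)) (g - l)))"
    by (rule ext) (simp add: bcoef_def Bpoly_upd[OF assms] mult_pCons_left del: coeff_pCons)
  then show ?thesis
    by (auto intro!: DERIV_imp_deriv derivative_eq_intros)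
qed

definition P_lead :: "nat \<Rightarrow> nat \<Rightarrow> complex \<Rightarrow> complex poly" where
  "P_lead N g I0 = (if odd N then 0 else monom 2 (g+1)) + monom I0 g"

lemma numer_eq: "numer N g al I0 lam z j = z j + poly (Qpoly N al) (lam j) / z j - poly (P_lead N g I0) (lam j)"
  by (simp add: numer_def P_lead_def poly_monom)

(* Since d b_l / d lambda_j = - b_0 [lambda^(g-l)] B_cofactor (deriv_bcoef), the I_l are the
   coefficients of the Lagrange interpolant of the numerators at the nodes lambda_j. *)
lemma Ppoly_lagrange:
  assumes g1: "g \<ge> 1" and b0: "b0 \<noteq> 0"
  shows "Ppoly N g al b0 I0 lam z =
    P_lead N g I0 + (\<Sum>j<g. smult (numer N g al I0 lam z j) (lagrange_basis lam {..<g} j))"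
proof -
  define c where "c j = numer N g al I0 lam z j / Bprime g b0 lam j * b0" for j
  have I: "Icoef N g al b0 I0 lam z l = (\<Sum>j<g. c j * coeff (B_cofactor g lam j) (g - l))" for l
    by (simp add: Icoef_def deriv_bcoef c_def sum_negf[symmetric] mult.assoc)
  have cofactor: "(\<Sum>m<g. monom (coeff (B_cofactor g lam j) m) m) = B_cofactor g lam j" if "j < g" for j
  proof -
    have "{..<g} = {..g-1}" using g1 by auto
    then show ?thesis
      using poly_as_sum_of_monoms'[OF degree_B_cofactor[OF that]] by simp
  qed
  have "(\<Sum>l=1..g. monom (Icoef N g al b0 I0 lam z l) (g - l))
      = (\<Sum>m<g. monom (\<Sum>j<g. c j * coeff (B_cofactor g lam j) m) m)"
    unfolding I by (rule sum.reindex_bij_witness[where i="\<lambda>m. g - m" and j="\<lambda>l. g - l"]) auto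
  also have "\<dots> = (\<Sum>j<g. smult (c j) (\<Sum>m<g. monom (coeff (B_cofactor g lam j) m) m))"
    by (simp add: smult_sum_right smult_monom monom_sum[symmetric] sum.swap[of _ "{..<g}" "{..<g}"])
  also have "\<dots> = (\<Sum>j<g. smult (c j) (B_cofactor g lam j))"
    by (rule sum.cong) (simp_all add: cofactor)
  also have "\<dots> = (\<Sum>j<g. smult (numer N g al I0 lam z j) (lagrange_basis lam {..<g} j))"
    by (rule sum.cong) (simp_all add: c_def lagrange_basis_eq_B_cofactor Bprime_def
        B_cofactor_def poly_prod b0)
  finally show ?thesis by (simp add: Ppoly_def P_lead_def)
qed

lemma coeff_lagrange_sum_high:
  fixes g :: nat
  assumes "g \<ge> 1" "g \<le> i"
  shows "coeff (\<Sum>j<g. smult (c j) (lagrange_basis xs {..<g} j)) i = 0"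
proof -
  have "{..<g} \<noteq> {}" using assms(1) by (simp add: lessThan_empty_iff)
  note degree_lagrange_sum[OF finite_lessThan this, of c xs]
  then show ?thesis using assms(2) by (simp add: coeff_eq_0)
qed

lemma poly_add_lagrange_sum_node:
  fixes g :: nat
  assumes "inj_on xs {..<g}" "i < g"
  shows "poly (R + (\<Sum>j<g. smult (c j) (lagrange_basis xs {..<g} j))) (xs i) = poly R (xs i) + c i"
  using assms by (simp add: poly_lagrange_sum_node)

lemma dH_dz_eq:
  assumes "j < g" "z j \<noteq> 0"
  shows "dH_dz N g al b0 I0 lam z j = (1 - poly (Qpoly N al) (lam j) / z j ^ 2) / Bprime g b0 lam j"
proof -
  define q where "q = poly (Qpoly N al) (lam j)"
  define r where "r = poly (P_lead N g I0) (lam j)"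
  define W where "W = Bprime g b0 lam j"
  define c where "c = (\<Sum>k\<in>{..<g}-{j}. numer N g al I0 lam z k / Bprime g b0 lam k)"
  have "Ham N g al b0 I0 lam (z(j := t)) = (t + q / t - r) / W + c" for t
  proof -
    have "(\<Sum>k\<in>{..<g}-{j}. numer N g al I0 lam (z(j := t)) k / Bprime g b0 lam k) = c"
      unfolding c_def by (rule sum.cong) (auto simp: numer_def)
    then show ?thesis
      using assms(1) by (simp add: Ham_def sum.remove[of "{..<g}" j] numer_eq q_def r_def W_def)
  qed
  moreover have "((\<lambda>t. t + q / t - r) has_field_derivative 1 - q / z j ^ 2) (at (z j))"
    using assms(2) by (auto intro!: derivative_eq_intros simp: field_simps power2_eq_square)
  then have "((\<lambda>t. (t + q / t - r) / W + c) has_field_derivative (1 - q / z j ^ 2) / W) (at (z j))"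
    using DERIV_add[OF DERIV_cdivide DERIV_const] by simp
  ultimately show ?thesis
    by (simp add: dH_dz_def q_def W_def DERIV_imp_deriv)
qed

lemma Bprime_upd_self: "Bprime g b0 (lam(j := t)) j = b0 * poly (B_cofactor g lam j) t"
  by (simp add: Bprime_def B_cofactor_def poly_prod)

lemma Bprime_upd_other:
  assumes "j < g" "k \<noteq> j"
  shows "Bprime g b0 (lam(j := t)) k = b0 * ((lam k - t) * (\<Prod>i\<in>{..<g}-{k}-{j}. lam k - lam i))"
proof -
  have "(\<Prod>i\<in>{..<g}-{k}. lam k - (lam(j := t)) i)
      = (lam k - t) * (\<Prod>i\<in>{..<g}-{k}-{j}. lam k - (lam(j := t)) i)"
    using assms by (subst prod.remove[of _ j]) auto
  also have "(\<Prod>i\<in>{..<g}-{k}-{j}. lam k - (lam(j := t)) i) = (\<Prod>i\<in>{..<g}-{k}-{j}. lam k - lam i)"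
    by (rule prod.cong) auto
  finally show ?thesis using assms by (simp add: Bprime_def)
qed

lemma Ham_term_self_derivative:
  assumes j: "j < g" and inj: "inj_on lam {..<g}" and b0: "b0 \<noteq> 0" and zj: "z j \<noteq> 0"
  shows "((\<lambda>t. numer N g al I0 (lam(j := t)) z j / Bprime g b0 (lam(j := t)) j) has_field_derivative
      (poly (pderiv (Qpoly N al)) (lam j) / z j - poly (pderiv (P_lead N g I0)) (lam j)
       - numer N g al I0 lam z j * poly (pderiv (lagrange_basis lam {..<g} j)) (lam j))
      / Bprime g b0 lam j) (at (lam j))"
proof -
  define Q where "Q = Qpoly N al"
  define R where "R = P_lead N g I0"
  define Cf where "Cf = B_cofactor g lam j"
  define F where "F t = z j + poly Q t / z j - poly R t" for t
  have D: "poly Cf (lam j) \<noteq> 0"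
    using inj j by (auto simp: Cf_def B_cofactor_def poly_prod prod_zero_iff inj_on_def)
  have eq: "(\<lambda>t. numer N g al I0 (lam(j := t)) z j / Bprime g b0 (lam(j := t)) j)
      = (\<lambda>t. F t / (b0 * poly Cf t))"
    by (simp add: numer_eq Bprime_upd_self F_def Q_def R_def Cf_def)
  have "((\<lambda>t. F t / (b0 * poly Cf t)) has_field_derivative
      ((poly (pderiv Q) (lam j) / z j - poly (pderiv R) (lam j)) * (b0 * poly Cf (lam j))
        - F (lam j) * (b0 * poly (pderiv Cf) (lam j))) / (b0 * poly Cf (lam j) * (b0 * poly Cf (lam j))))
      (at (lam j))"
    unfolding F_def using D b0 zj by (intro DERIV_divide) (auto intro!: derivative_eq_intros)
  moreover have "((poly (pderiv Q) (lam j) / z j - poly (pderiv R) (lam j)) * (b0 * poly Cf (lam j))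
        - F (lam j) * (b0 * poly (pderiv Cf) (lam j))) / (b0 * poly Cf (lam j) * (b0 * poly Cf (lam j)))
      = (poly (pderiv Q) (lam j) / z j - poly (pderiv R) (lam j)
         - F (lam j) * (poly (pderiv Cf) (lam j) / poly Cf (lam j))) / (b0 * poly Cf (lam j))"
    using D b0 by (simp add: field_simps)
  ultimately show ?thesis
    unfolding eq using Bprime_upd_self[of g b0 lam j "lam j"]
    by (simp add: lagrange_basis_eq_B_cofactor pderiv_smult numer_eq F_def Q_def R_def Cf_def)
qed

lemma Ham_term_other_derivative:
  assumes j: "j < g" and k: "k < g" "k \<noteq> j" and inj: "inj_on lam {..<g}" and b0: "b0 \<noteq> 0"
  shows "((\<lambda>t. numer N g al I0 (lam(j := t)) z k / Bprime g b0 (lam(j := t)) k) has_field_derivative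
      - numer N g al I0 lam z k * poly (pderiv (lagrange_basis lam {..<g} k)) (lam j)
      / Bprime g b0 lam j) (at (lam j))"
proof -
  define n where "n = numer N g al I0 lam z k"
  define d where "d = lam k - lam j"
  define M where "M = (\<Prod>i\<in>{..<g}-{k}-{j}. lam k - lam i)"
  define E where "E = (\<Prod>i\<in>{..<g}-{k}-{j}. lam j - lam i)"
  have d: "d \<noteq> 0" using inj j k by (auto simp: d_def inj_on_def)
  have M: "M \<noteq> 0" and E: "E \<noteq> 0"
    using inj j k by (auto simp: M_def E_def prod_zero_iff inj_on_def)
  have Dk: "(\<Prod>i\<in>{..<g}-{k}. lam k - lam i) = d * M"
    using Bprime_upd_other[OF j k(2), of 1 lam "lam j"] by (simp add: Bprime_def M_def d_def)
  have Dj: "Bprime g b0 lam j = b0 * (- d * E)"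
  proof -
    have "{..<g}-{j}-{k} = {..<g}-{k}-{j}" by blast
    then show ?thesis
      using Bprime_upd_other[OF k(1) k(2)[symmetric], of b0 lam "lam k"] by (simp add: E_def d_def)
  qed
  have eq: "(\<lambda>t. numer N g al I0 (lam(j := t)) z k / Bprime g b0 (lam(j := t)) k)
      = (\<lambda>t. n / (b0 * ((lam k - t) * M)))"
    using k by (simp add: n_def M_def numer_def Bprime_upd_other[OF j k(2)])
  have L': "poly (pderiv (lagrange_basis lam {..<g} k)) (lam j) = E / (d * M)"
    using poly_pderiv_lagrange_basis_other[of "{..<g}" j k lam] j k by (simp add: E_def Dk)
  have "((\<lambda>t. n / (b0 * ((lam k - t) * M))) has_field_derivative
      (0 * (b0 * (d * M)) - n * (b0 * (- M))) / (b0 * (d * M) * (b0 * (d * M)))) (at (lam j))"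
    unfolding d_def using d M b0 by (intro DERIV_divide) (auto intro!: derivative_eq_intros simp: d_def)
  moreover have "(0 * (b0 * (d * M)) - n * (b0 * (- M))) / (b0 * (d * M) * (b0 * (d * M)))
      = - n * (E / (d * M)) / (b0 * (- d * E))"
    using d M E b0 by (simp add: field_simps)
  ultimately show ?thesis
    unfolding eq L' Dj n_def[symmetric] by simp
qed

lemma dH_dlam_eq:
  assumes g1: "g \<ge> 1" and j: "j < g" and inj: "inj_on lam {..<g}" and b0: "b0 \<noteq> 0"
    and zj: "z j \<noteq> 0"
  shows "dH_dlam N g al b0 I0 lam z j =
    (poly (pderiv (Qpoly N al)) (lam j) / z j - poly (pderiv (Ppoly N g al b0 I0 lam z)) (lam j))
    / Bprime g b0 lam j"
proof -
  define L' where "L' k = poly (pderiv (lagrange_basis lam {..<g} k)) (lam j)" for k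
  define T where "T k = (if k = j
      then (poly (pderiv (Qpoly N al)) (lam j) / z j - poly (pderiv (P_lead N g I0)) (lam j)
            - numer N g al I0 lam z j * L' j) / Bprime g b0 lam j
      else - numer N g al I0 lam z k * L' k / Bprime g b0 lam j)" for k
  have "((\<lambda>t. numer N g al I0 (lam(j := t)) z k / Bprime g b0 (lam(j := t)) k) has_field_derivative T k)
      (at (lam j))" if k: "k < g" for k
  proof (cases "k = j")
    case True
    then show ?thesis using Ham_term_self_derivative[where z=z, OF j inj b0 zj] by (simp add: T_def L'_def)
  next
    case False
    then show ?thesis using Ham_term_other_derivative[OF j k False inj b0] by (simp add: T_def L'_def)
  qed
  then have "((\<lambda>t. Ham N g al b0 I0 (lam(j := t)) z) has_field_derivative (\<Sum>k<g. T k)) (at (lam j))"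
    unfolding Ham_def by (intro DERIV_sum) auto
  moreover have "(\<Sum>k<g. T k) =
      (poly (pderiv (Qpoly N al)) (lam j) / z j - poly (pderiv (P_lead N g I0)) (lam j)
       - (\<Sum>k<g. numer N g al I0 lam z k * L' k)) / Bprime g b0 lam j"
  proof -
    have "(\<Sum>k\<in>{..<g}-{j}. T k)
        = (\<Sum>k\<in>{..<g}-{j}. - (numer N g al I0 lam z k * L' k) / Bprime g b0 lam j)"
      by (rule sum.cong) (auto simp: T_def)
    also have "\<dots> = - (\<Sum>k\<in>{..<g}-{j}. numer N g al I0 lam z k * L' k) / Bprime g b0 lam j"
      by (simp add: sum_divide_distrib sum_negf)
    finally show ?thesis
      using j by (simp add: sum.remove[of "{..<g}" j] T_def diff_divide_distrib add_divide_distrib)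
  qed
  moreover have "poly (pderiv (Ppoly N g al b0 I0 lam z)) (lam j)
      = poly (pderiv (P_lead N g I0)) (lam j) + (\<Sum>k<g. numer N g al I0 lam z k * L' k)"
    by (simp add: Ppoly_lagrange[OF g1 b0] pderiv_add pderiv_sum pderiv_smult poly_sum L'_def)
  ultimately show ?thesis
    unfolding dH_dlam_def by (simp add: DERIV_imp_deriv diff_diff_add)
qed

definition a0coef :: "nat \<Rightarrow> (nat \<Rightarrow> complex) \<Rightarrow> complex \<Rightarrow> complex" where
  "a0coef N al I0 = (if odd N then I0 / 2 else (I0 - alpha_tot N al / 2) / 2)"

definition A_lead :: "nat \<Rightarrow> nat \<Rightarrow> (nat \<Rightarrow> complex) \<Rightarrow> complex \<Rightarrow> complex poly" where
  "A_lead N g al I0 = (if odd N then 0 else monom 1 (g+1)) + monom (a0coef N al I0) g"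

definition A_lagrange :: "nat \<Rightarrow> nat \<Rightarrow> (nat \<Rightarrow> complex) \<Rightarrow> complex \<Rightarrow> (nat \<Rightarrow> complex)
    \<Rightarrow> (nat \<Rightarrow> complex) \<Rightarrow> complex poly" where
  "A_lagrange N g al I0 lam z = A_lead N g al I0
     + (\<Sum>j<g. smult (z j - poly (A_lead N g al I0) (lam j)) (lagrange_basis lam {..<g} j))"

lemma A_lagrange_props:
  assumes g1: "g \<ge> 1" and inj: "inj_on lam {..<g}"
  shows "coeff (A_lagrange N g al I0 lam z) g = a0coef N al I0"
    "coeff (A_lagrange N g al I0 lam z) (g + 1) = (if odd N then 0 else 1)"
    "degree (A_lagrange N g al I0 lam z) \<le> (if odd N then g else g + 1)"
    "\<forall>j<g. poly (A_lagrange N g al I0 lam z) (lam j) = z j"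
proof -
  show "coeff (A_lagrange N g al I0 lam z) g = a0coef N al I0"
    "coeff (A_lagrange N g al I0 lam z) (g + 1) = (if odd N then 0 else 1)"
    by (simp_all add: A_lagrange_def A_lead_def coeff_lagrange_sum_high[OF g1])
  show "\<forall>j<g. poly (A_lagrange N g al I0 lam z) (lam j) = z j"
    using poly_add_lagrange_sum_node[OF inj] by (simp add: A_lagrange_def)
  have "{..<g} \<noteq> {}" using g1 by (simp add: lessThan_empty_iff)
  then have "degree (\<Sum>j<g. smult (z j - poly (A_lead N g al I0) (lam j)) (lagrange_basis lam {..<g} j)) < g"
    using degree_lagrange_sum[OF finite_lessThan] by fastforce
  moreover have "degree (A_lead N g al I0) \<le> (if odd N then g else g + 1)"
    by (auto simp: A_lead_def intro!: degree_add_le order.trans[OF degree_monom_le])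
  ultimately show "degree (A_lagrange N g al I0 lam z) \<le> (if odd N then g else g + 1)"
    unfolding A_lagrange_def by (intro degree_add_le) auto
qed

lemma Apoly_eq_A_lagrange:
  assumes g1: "g \<ge> 1" and inj: "inj_on lam {..<g}"
  shows "Apoly N g al I0 lam z = A_lagrange N g al I0 lam z"
proof -
  note a_props = A_lagrange_props[OF g1 inj, of N al I0 z]
  let ?a = "A_lagrange N g al I0 lam z"
  have a_top: "degree ?a \<le> g + 1" using a_props(3) by (auto split: if_splits)
  have uniq: "p = ?a" if p: "(if odd N then degree p \<le> g \<and> coeff p g = I0 / 2
      else degree p \<le> g + 1 \<and> coeff p (g+1) = 1 \<and> coeff p g = (I0 - alpha_tot N al / 2) / 2)
      \<and> (\<forall>j<g. poly p (lam j) = z j)" for p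
  proof (rule poly_eqI_high_coeffs[of "lam ` {..<g}"])
    have p_top: "degree p \<le> g + 1" "coeff p g = a0coef N al I0"
      "coeff p (g + 1) = (if odd N then 0 else 1)"
      using p by (cases "odd N"; auto simp: a0coef_def coeff_eq_0)+
    fix i assume "card (lam ` {..<g}) \<le> i"
    then have "g \<le> i" using inj by (simp add: card_image)
    then consider "i = g" | "i = g + 1" | "i > g + 1" by linarith
    then show "coeff p i = coeff ?a i"
    proof cases
      case 3
      then show ?thesis using p_top(1) a_top by (simp add: coeff_eq_0)
    qed (use p_top a_props in simp_all)
  qed (use p a_props in auto)
  have ex: "(if odd N then degree ?a \<le> g \<and> coeff ?a g = I0 / 2
      else degree ?a \<le> g + 1 \<and> coeff ?a (g+1) = 1 \<and> coeff ?a g = (I0 - alpha_tot N al / 2) / 2)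
      \<and> (\<forall>j<g. poly ?a (lam j) = z j)"
    using a_props by (cases "odd N") (simp_all add: a0coef_def)
  show ?thesis unfolding Apoly_def by (rule the_equality) (rule ex, erule uniq)
qed

lemma Apoly_props:
  assumes g1: "g \<ge> 1" and inj: "inj_on lam {..<g}"
  shows "coeff (Apoly N g al I0 lam z) g = a0coef N al I0"
    "coeff (Apoly N g al I0 lam z) (g + 1) = (if odd N then 0 else 1)"
    "degree (Apoly N g al I0 lam z) \<le> g + 1"
    "\<forall>j<g. poly (Apoly N g al I0 lam z) (lam j) = z j"
  using A_lagrange_props[OF g1 inj, of N al I0 z] Apoly_eq_A_lagrange[OF g1 inj, of N al I0 z]
  by (auto split: if_splits)

lemma Ppoly_props:
  assumes g1: "g \<ge> 1" and b0: "b0 \<noteq> 0" and inj: "inj_on lam {..<g}"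
  shows "coeff (Ppoly N g al b0 I0 lam z) g = I0"
    "coeff (Ppoly N g al b0 I0 lam z) (g + 1) = (if odd N then 0 else 2)"
    "degree (Ppoly N g al b0 I0 lam z) \<le> g + 1"
    "\<forall>j<g. poly (Ppoly N g al b0 I0 lam z) (lam j) = z j + poly (Qpoly N al) (lam j) / z j"
proof -
  note P = Ppoly_lagrange[OF g1 b0]
  show "coeff (Ppoly N g al b0 I0 lam z) g = I0"
    "coeff (Ppoly N g al b0 I0 lam z) (g + 1) = (if odd N then 0 else 2)"
    by (simp_all add: P P_lead_def coeff_lagrange_sum_high[OF g1])
  show "\<forall>j<g. poly (Ppoly N g al b0 I0 lam z) (lam j) = z j + poly (Qpoly N al) (lam j) / z j"
    using poly_add_lagrange_sum_node[OF inj] by (simp add: P numer_eq)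
  have "{..<g} \<noteq> {}" using g1 by (simp add: lessThan_empty_iff)
  then have "degree (\<Sum>j<g. smult (numer N g al I0 lam z j) (lagrange_basis lam {..<g} j)) < g"
    using degree_lagrange_sum[OF finite_lessThan] by fastforce
  moreover have "degree (P_lead N g I0) \<le> g + 1"
    by (auto simp: P_lead_def intro!: degree_add_le order.trans[OF degree_monom_le])
  ultimately show "degree (Ppoly N g al b0 I0 lam z) \<le> g + 1"
    unfolding P by (intro degree_add_le) auto
qed

section \<open>The flow\<close>

locale dressing_chain_flow =
  fixes N g :: nat and al :: "nat \<Rightarrow> complex" and v :: "real \<Rightarrow> complex"
    and lam z :: "real \<Rightarrow> nat \<Rightarrow> complex" and S :: "real set"
  assumes Ng: "N = 2*g + 1 \<or> N = 2*g + 2" and g1: "g \<ge> 1"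
    and S: "open S"
    and v': "\<forall>x\<in>S. (v has_vector_derivative alpha_tot N al / 2) (at x)"
    and b0nz: "even N \<longrightarrow> (\<forall>x\<in>S. v x \<noteq> 0)"
    and dist: "\<forall>x\<in>S. \<forall>j<g. \<forall>k<g. j \<noteq> k \<longrightarrow> lam x j \<noteq> lam x k"
    and znz: "\<forall>x\<in>S. \<forall>j<g. z x j \<noteq> 0"
    and lam': "\<forall>x\<in>S. \<forall>j<g. ((\<lambda>y. lam y j) has_vector_derivative
        z x j * dH_dz N g al (b0fun N (v x)) (I0fun N g al (v x)) (lam x) (z x) j) (at x)"
    and z': "\<forall>x\<in>S. \<forall>j<g. ((\<lambda>y. z y j) has_vector_derivative
        - z x j * dH_dlam N g al (b0fun N (v x)) (I0fun N g al (v x)) (lam x) (z x) j) (at x)"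
begin

abbreviation "b0 y \<equiv> b0fun N (v y)"
abbreviation "I0 y \<equiv> I0fun N g al (v y)"
abbreviation "A \<equiv> Ax N g al v lam z"
abbreviation "B \<equiv> Bx N g v lam"
abbreviation "C \<equiv> Cx N g al v lam z"
abbreviation "D \<equiv> Dx N g al v lam z"
abbreviation "P \<equiv> Px N g al v lam z"
abbreviation "Q \<equiv> Qpoly N al"
abbreviation "alpha \<equiv> alpha_tot N al"
abbreviation "u1 \<equiv> u1x N g al v lam z"
abbreviation "lam_dot x j \<equiv> z x j * dH_dz N g al (b0 x) (I0 x) (lam x) (z x) j"
abbreviation "z_dot x j \<equiv> - z x j * dH_dlam N g al (b0 x) (I0 x) (lam x) (z x) j"
abbreviation "Bprime_at x j \<equiv> Bprime g (b0 x) (lam x) j"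

lemma inj_lam: "y \<in> S \<Longrightarrow> inj_on (lam y) {..<g}"
  using dist by (auto simp: inj_on_def)

lemma b0_nonzero: "y \<in> S \<Longrightarrow> b0 y \<noteq> 0"
  using b0nz by (auto simp: b0fun_def)

lemma z_nonzero: "x \<in> S \<Longrightarrow> j < g \<Longrightarrow> z x j \<noteq> 0"
  using znz by auto

lemma Bprime_at_nonzero: "x \<in> S \<Longrightarrow> j < g \<Longrightarrow> Bprime_at x j \<noteq> 0"
  using b0_nonzero[of x] dist by (auto simp: Bprime_def prod_zero_iff)

lemma A_props:
  assumes "y \<in> S"
  shows "coeff (A y) g = a0coef N al (I0 y)" "coeff (A y) (g + 1) = (if odd N then 0 else 1)"
    "degree (A y) \<le> g + 1" "\<And>j. j < g \<Longrightarrow> poly (A y) (lam y j) = z y j"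
  using Apoly_props[OF g1 inj_lam[OF assms], of N al "I0 y" "z y"] by (simp_all add: Ax_def)

lemma P_props:
  assumes "y \<in> S"
  shows "coeff (P y) g = I0 y" "coeff (P y) (g + 1) = (if odd N then 0 else 2)"
    "degree (P y) \<le> g + 1" "\<And>j. j < g \<Longrightarrow> poly (P y) (lam y j) = z y j + poly Q (lam y j) / z y j"
  using Ppoly_props[OF g1 b0_nonzero[OF assms] inj_lam[OF assms], of N al "I0 y" "z y"]
  by (simp_all add: Px_def)

lemma B_eq: "B y = smult (b0 y) (\<Prod>j<g. [:- lam y j, 1:])"
  by (simp add: Bx_def Bpoly_def)

lemma B_props:
  assumes "y \<in> S"
  shows "degree (B y) = g" "coeff (B y) g = b0 y" "B y \<noteq> 0"
    "\<And>j. j < g \<Longrightarrow> poly (B y) (lam y j) = 0"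
    "\<And>j. j < g \<Longrightarrow> poly (pderiv (B y)) (lam y j) = Bprime_at y j"
proof -
  have "{..<g} \<noteq> {}" using g1 by (simp add: lessThan_empty_iff)
  then have "degree (\<Prod>j<g. [:- lam y j, 1:]) = g" "coeff (\<Prod>j<g. [:- lam y j, 1:]) g = 1"
    using monic_prod_linear_coeffs[of "{..<g}" "\<lambda>j. - lam y j"] by simp_all
  then show "degree (B y) = g" "coeff (B y) g = b0 y" "B y \<noteq> 0"
    using b0_nonzero[OF assms] by (auto simp: B_eq)
  show "poly (B y) (lam y j) = 0" if "j < g" for j
    using that by (auto simp: B_eq poly_prod prod_zero_iff)
  show "poly (pderiv (B y)) (lam y j) = Bprime_at y j" if "j < g" for j
  proof -
    have "poly (pderiv (\<Prod>j<g. [:- lam y j, 1:])) (lam y j) = poly (B_cofactor g (lam y) j) (lam y j)"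
      unfolding prod_linear_split[OF that] by (rule poly_pderiv_linear_mult_at_root)
    then show ?thesis by (simp add: B_eq pderiv_smult Bprime_def B_cofactor_def poly_prod)
  qed
qed

lemma D_eq: "D y = P y - A y"
  by (simp add: Dx_def)

lemma B_dvd_AD_minus_Q:
  assumes "y \<in> S"
  shows "B y dvd A y * D y - Q"
proof -
  have "poly (A y * D y - Q) (lam y j) = 0" if "j < g" for j
    using A_props(4)[OF assms that] P_props(4)[OF assms that] z_nonzero[OF assms that]
    by (simp add: D_eq field_simps)
  then have "(\<Prod>j<g. [:- lam y j, 1:]) dvd A y * D y - Q"
    using inj_lam[OF assms] by (intro prod_linear_dvd) auto
  then show ?thesis using b0_nonzero[OF assms] by (simp add: B_eq smult_dvd_iff)
qed

lemma B_mult_C: "y \<in> S \<Longrightarrow> B y * C y = A y * D y - Q"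
  using B_dvd_AD_minus_Q by (simp add: Cx_def dvd_mult_div_cancel)

lemma AD_minus_Q_top:
  assumes y: "y \<in> S"
  shows "degree (A y * D y - Q) \<le> 2*g + 1" "coeff (A y * D y - Q) (2*g + 1) = b0 y * b0 y"
proof -
  define e :: complex where "e = (if odd N then 0 else 1)"
  note A = A_props[OF y] and P = P_props[OF y]
  have N2: "N \<ge> 2" using Ng g1 by auto
  have dD: "degree (D y) \<le> g + 1" unfolding D_eq using A P by (intro degree_diff_le) auto
  have cD: "coeff (D y) (g + 1) = e" "coeff (D y) g = I0 y - a0coef N al (I0 y)"
    using A P by (simp_all add: D_eq e_def)
  have dAD: "degree (A y * D y) \<le> 2*g + 2"
    using degree_mult_le[of "A y" "D y"] A(3) dD by linarith
  have cAD2: "coeff (A y * D y) (2*g + 2) = e"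
    using coeff_mult_degree_bounds[OF A(3) dD] A cD by (simp add: mult_2 e_def)
  have cAD1: "coeff (A y * D y) (2*g + 1) = e * I0 y"
    using coeff_mult_below_degree_bounds[of "A y" g "D y" g] A(3) dD A cD
    by (cases "odd N") (simp_all add: mult_2 e_def)
  have Q: "degree Q \<le> 2*g + 2" "coeff Q (2*g + 2) = e"
    "coeff Q (2*g + 1) = (if odd N then -1 else (\<Sum>n=1..2*g+1. betaN al n))"
    using Qpoly_coeffs[OF N2, of al] Ng by (auto simp: e_def coeff_eq_0)
  show "degree (A y * D y - Q) \<le> 2*g + 1"
  proof (rule degree_le, intro allI impI)
    fix i assume "2*g + 1 < i"
    then consider "i = 2*g + 2" | "i > 2*g + 2" by linarith
    then show "coeff (A y * D y - Q) i = 0"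
      by cases (use cAD2 Q dAD in \<open>simp_all add: coeff_eq_0\<close>)
  qed
  show "coeff (A y * D y - Q) (2*g + 1) = b0 y * b0 y"
    using cAD1 Q by (cases "odd N") (simp_all add: e_def b0fun_def I0fun_def power2_eq_square)
qed

lemma C_top:
  assumes y: "y \<in> S"
  shows "degree (C y) \<le> g + 1" "coeff (C y) (g + 1) = b0 y"
proof -
  note B = B_props[OF y]
  show dC: "degree (C y) \<le> g + 1"
  proof (cases "C y = 0")
    case False
    then have "degree (B y * C y) = g + degree (C y)" using B by (simp add: degree_mult_eq)
    then show ?thesis using B_mult_C[OF y] AD_minus_Q_top(1)[OF y] by simp
  qed simp
  have "b0 y * coeff (C y) (g + 1) = b0 y * b0 y"
    using coeff_mult_degree_bounds[of "B y" g "C y" "g + 1"] B dC B_mult_C[OF y] AD_minus_Q_top(2)[OF y]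
    by (simp add: mult_2 add.assoc)
  then show "coeff (C y) (g + 1) = b0 y" using b0_nonzero[OF y] by simp
qed

lemma hamilton_at_nodes:
  assumes x: "x \<in> S" and j: "j < g"
  shows "Bprime_at x j * lam_dot x j = z x j - poly Q (lam x j) / z x j"
    "Bprime_at x j * z_dot x j = z x j * poly (pderiv (P x)) (lam x j) - poly (pderiv Q) (lam x j)"
  using Bprime_at_nonzero[OF x j] z_nonzero[OF x j]
  by (simp_all add: dH_dz_eq[OF j] dH_dlam_eq[OF g1 j inj_lam[OF x] b0_nonzero[OF x]] Px_def
      field_simps power2_eq_square)

lemma has_vector_derivative_b0:
  "x \<in> S \<Longrightarrow> ((\<lambda>y. b0 y) has_vector_derivative (if odd N then 0 else alpha / 2)) (at x)"
  using v' by (cases "odd N") (auto simp: b0fun_def)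

lemma has_vector_derivative_I0:
  assumes x: "x \<in> S"
  shows "((\<lambda>y. I0 y) has_vector_derivative alpha * b0 x) (at x)"
proof -
  have v: "(v has_vector_derivative alpha / 2) (at x)" using v' x by blast
  show ?thesis
  proof (cases "odd N")
    case True
    then show ?thesis
      using has_vector_derivative_mult_right[OF v, of 2] by (simp add: I0fun_def b0fun_def)
  next
    case False
    have "((\<lambda>y. v y * v y + (\<Sum>n=1..2*g+1. betaN al n)) has_vector_derivative
        v x * (alpha / 2) + alpha / 2 * v x) (at x)"
      by (subst has_vector_derivative_add_const) (rule has_vector_derivative_mult[OF v v])
    then show ?thesis
      using False by (simp add: I0fun_def b0fun_def power2_eq_square algebra_simps)
  qed
qed

lemma differentiable_lam: "x \<in> S \<Longrightarrow> j < g \<Longrightarrow> (\<lambda>y. lam y j) differentiable (at x)"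
  using lam' differentiableI_vector by blast

lemma differentiable_z: "x \<in> S \<Longrightarrow> j < g \<Longrightarrow> (\<lambda>y. z y j) differentiable (at x)"
  using z' differentiableI_vector by blast

lemma differentiable_I0: "x \<in> S \<Longrightarrow> (\<lambda>y. I0 y) differentiable (at x)"
  using has_vector_derivative_I0 differentiableI_vector by blast

lemma differentiable_lagrange_basis:
  assumes x: "x \<in> S" and j: "j < g"
  shows "(\<lambda>y. poly (lagrange_basis (lam y) {..<g} j) \<mu>) differentiable (at x)"
proof -
  have "(\<lambda>y. (\<Prod>i\<in>{..<g}-{j}. \<mu> - lam y i) / (\<Prod>i\<in>{..<g}-{j}. lam y j - lam y i))
      differentiable (at x)"
    using dist x j
    by (intro differentiable_divide differentiable_prod differentiable_diff differentiable_const
        differentiable_lam[OF x]) (auto simp: prod_zero_iff)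
  then show ?thesis by (simp add: poly_lagrange_basis)
qed

lemma differentiable_poly_A_lead:
  assumes x: "x \<in> S" and w: "w differentiable (at x)"
  shows "(\<lambda>y. poly (A_lead N g al (I0 y)) (w y)) differentiable (at x)"
proof -
  have "(\<lambda>y. a0coef N al (I0 y)) differentiable (at x)"
    unfolding a0coef_def
    by (cases "odd N") (auto intro!: differentiable_divide differentiable_diff differentiable_I0[OF x])
  then have "(\<lambda>y. (if odd N then 0 else 1) * w y ^ (g + 1) + a0coef N al (I0 y) * w y ^ g)
      differentiable (at x)"
    by (intro differentiable_add differentiable_mult differentiable_power w differentiable_const)
  moreover have "(\<lambda>y. poly (A_lead N g al (I0 y)) (w y))
      = (\<lambda>y. (if odd N then 0 else 1) * w y ^ (g + 1) + a0coef N al (I0 y) * w y ^ g)"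
    by (rule ext) (simp add: A_lead_def poly_monom)
  ultimately show ?thesis by simp
qed

lemma differentiable_poly_P_lead:
  assumes x: "x \<in> S" and w: "w differentiable (at x)"
  shows "(\<lambda>y. poly (P_lead N g (I0 y)) (w y)) differentiable (at x)"
proof -
  have "(\<lambda>y. (if odd N then 0 else 2) * w y ^ (g + 1) + I0 y * w y ^ g) differentiable (at x)"
    by (intro differentiable_add differentiable_mult differentiable_power w differentiable_const
        differentiable_I0[OF x])
  moreover have "(\<lambda>y. poly (P_lead N g (I0 y)) (w y))
      = (\<lambda>y. (if odd N then 0 else 2) * w y ^ (g + 1) + I0 y * w y ^ g)"
    by (rule ext) (simp add: P_lead_def poly_monom)
  ultimately show ?thesis by simp
qed

lemma differentiable_poly_A:
  assumes x: "x \<in> S"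
  shows "(\<lambda>y. poly (A y) \<mu>) differentiable (at x)"
proof -
  have "(\<lambda>y. (z y j - poly (A_lead N g al (I0 y)) (lam y j)) * poly (lagrange_basis (lam y) {..<g} j) \<mu>)
      differentiable (at x)" if "j < g" for j
    by (intro differentiable_mult differentiable_diff differentiable_poly_A_lead differentiable_z
        differentiable_lam differentiable_lagrange_basis x that)
  then have "(\<lambda>y. poly (A_lead N g al (I0 y)) \<mu> + (\<Sum>j<g. (z y j - poly (A_lead N g al (I0 y)) (lam y j))
      * poly (lagrange_basis (lam y) {..<g} j) \<mu>)) differentiable (at x)"
    by (intro differentiable_add differentiable_sum differentiable_poly_A_lead differentiable_const x)
      auto
  then show ?thesis
    by (rule differentiable_transform_within_open[OF _ S x])
      (simp add: Ax_def Apoly_eq_A_lagrange[OF g1 inj_lam] A_lagrange_def poly_sum)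
qed

lemma differentiable_poly_B:
  assumes x: "x \<in> S"
  shows "(\<lambda>y. poly (B y) \<mu>) differentiable (at x)"
proof -
  have "(\<lambda>y. b0 y) differentiable (at x)"
    using has_vector_derivative_b0[OF x] differentiableI_vector by blast
  then have "(\<lambda>y. b0 y * (\<Prod>j<g. \<mu> - lam y j)) differentiable (at x)"
    by (intro differentiable_mult differentiable_prod differentiable_diff differentiable_const
        differentiable_lam[OF x]) auto
  then show ?thesis by (simp add: B_eq poly_prod)
qed

lemma differentiable_poly_P:
  assumes x: "x \<in> S"
  shows "(\<lambda>y. poly (P y) \<mu>) differentiable (at x)"
proof -
  have numer: "(\<lambda>y. numer N g al (I0 y) (lam y) (z y) j) differentiable (at x)" if "j < g" for j
    unfolding numer_eq using z_nonzero[OF x that]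
    by (intro differentiable_add differentiable_diff differentiable_divide differentiable_poly_compose
        differentiable_poly_P_lead differentiable_z differentiable_lam x that) auto
  have "(\<lambda>y. numer N g al (I0 y) (lam y) (z y) j * poly (lagrange_basis (lam y) {..<g} j) \<mu>)
      differentiable (at x)" if "j < g" for j
    by (intro differentiable_mult numer differentiable_lagrange_basis x that)
  then have "(\<lambda>y. poly (P_lead N g (I0 y)) \<mu> + (\<Sum>j<g. numer N g al (I0 y) (lam y) (z y) j
      * poly (lagrange_basis (lam y) {..<g} j) \<mu>)) differentiable (at x)"
    by (intro differentiable_add differentiable_sum differentiable_poly_P_lead differentiable_const x)
      auto
  then show ?thesis
    by (rule differentiable_transform_within_open[OF _ S x])
      (simp add: Px_def Ppoly_lagrange[OF g1 b0_nonzero] poly_sum)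
qed

lemma differentiable_poly_C:
  assumes x: "x \<in> S" and \<mu>: "poly (B x) \<mu> \<noteq> 0"
  shows "(\<lambda>y. poly (C y) \<mu>) differentiable (at x)"
proof -
  have cont: "continuous (at x) (\<lambda>y. poly (B y) \<mu>)"
    using differentiable_poly_B[OF x] differentiable_imp_continuous_within by blast
  obtain e where e: "e > 0" "\<And>y. dist x y < e \<Longrightarrow> poly (B y) \<mu> \<noteq> 0"
    using continuous_at_avoid[OF cont \<mu>] by blast
  have "(\<lambda>y. poly (A y * D y - Q) \<mu> / poly (B y) \<mu>) differentiable (at x)"
    using \<mu> by (simp add: D_eq)
      (intro differentiable_divide differentiable_diff differentiable_mult differentiable_poly_A
        differentiable_poly_P differentiable_poly_B differentiable_const x; simp)
  then show ?thesis
  proof (rule differentiable_transform_within_open[where T="S \<inter> ball x e"])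
    fix y assume y: "y \<in> S \<inter> ball x e"
    then have "poly (B y) \<mu> \<noteq> 0" using e by auto
    then show "poly (A y * D y - Q) \<mu> / poly (B y) \<mu> = poly (C y) \<mu>"
      using y by (simp flip: B_mult_C add: field_simps)
  qed (use S x e in auto)
qed

lemma poly_eq_by_nodes:
  assumes x: "x \<in> S" and deg: "degree p \<le> g + 1" "degree q \<le> g + 1"
    and top: "coeff p g = coeff q g" "coeff p (g + 1) = coeff q (g + 1)"
    and nodes: "\<And>j. j < g \<Longrightarrow> poly p (lam x j) = poly q (lam x j)"
  shows "p = q"
proof (rule poly_eqI_high_coeffs[of "lam x ` {..<g}"])
  fix i assume "card (lam x ` {..<g}) \<le> i"
  then have "g \<le> i" using inj_lam[OF x] by (simp add: card_image)
  then consider "i = g" | "i = g + 1" | "i > g + 1" by linarith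
  then show "coeff p i = coeff q i"
    by cases (use top deg in \<open>simp_all add: coeff_eq_0\<close>)
qed (use nodes in auto)

lemma family_derivative_off_B_roots:
  assumes x: "x \<in> S" and deg: "\<And>y. y \<in> S \<Longrightarrow> degree (p y) \<le> g + 1"
    and dif: "\<And>\<mu>. poly (B x) \<mu> \<noteq> 0 \<Longrightarrow> (\<lambda>y. poly (p y) \<mu>) differentiable (at x)"
  obtains p' where "degree p' \<le> g + 1" "has_poly_derivative p p' x"
    "\<And>i. ((\<lambda>y. coeff (p y) i) has_vector_derivative coeff p' i) (at x)"
    "\<And>s s'. (s has_vector_derivative s') (at x) \<Longrightarrow>
       ((\<lambda>y. poly (p y) (s y)) has_vector_derivative poly p' (s x) + poly (pderiv (p x)) (s x) * s') (at x)"
proof -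
  \<comment> \<open>Nodes off the roots of \<open>B x\<close>, where \<open>C = (A D - Q) / B\<close> is visibly differentiable.\<close>
  have "finite {w. poly (B x) w = 0}" using poly_roots_finite B_props(3)[OF x] by blast
  then obtain X :: "complex set" where X: "finite X" "card X = Suc (g + 1)" "X \<inter> {w. poly (B x) w = 0} = {}"
    using finite_set_avoiding[OF _ infinite_UNIV_char_0] by metis
  show ?thesis
    by (rule polynomial_family_derivative[OF S x deg X(1,2)]) (use dif X(3) that in blast)+
qed

lemma B_derivative:
  assumes x: "x \<in> S"
  shows "has_poly_derivative B (D x - A x) x"
proof -
  obtain Bd where Bd: "degree Bd \<le> g + 1" "has_poly_derivative B Bd x"
      "\<And>i. ((\<lambda>y. coeff (B y) i) has_vector_derivative coeff Bd i) (at x)"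
      "\<And>s s'. (s has_vector_derivative s') (at x) \<Longrightarrow>
         ((\<lambda>y. poly (B y) (s y)) has_vector_derivative poly Bd (s x) + poly (pderiv (B x)) (s x) * s') (at x)"
    by (rule family_derivative_off_B_roots[OF x, where p=B]) (use B_props(1) differentiable_poly_B[OF x] in auto)
  have "coeff Bd (g + 1) = 0"
    by (rule vector_derivative_eq_on_open[OF Bd(3) has_vector_derivative_const S x])
      (simp add: B_props(1) coeff_eq_0)
  moreover have "coeff Bd g = (if odd N then 0 else alpha / 2)"
    by (rule vector_derivative_eq_on_open[OF Bd(3) has_vector_derivative_b0[OF x] S x])
      (simp add: B_props(2))
  moreover have "poly Bd (lam x j) = poly (D x - A x) (lam x j)" if j: "j < g" for j
  proof -
    have "poly Bd (lam x j) + poly (pderiv (B x)) (lam x j) * lam_dot x j = 0"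
      by (rule vector_derivative_eq_on_open[OF Bd(4)[OF lam'[rule_format, OF x j]]
          has_vector_derivative_const S x]) (simp add: B_props(4) j)
    then have "poly Bd (lam x j) = - (Bprime_at x j * lam_dot x j)"
      using B_props(5)[OF x j] by (simp add: eq_neg_iff_add_eq_0 mult.commute)
    also have "\<dots> = poly Q (lam x j) / z x j - z x j"
      using hamilton_at_nodes(1)[OF x j] by simp
    also have "\<dots> = poly (D x - A x) (lam x j)"
      using A_props(4)[OF x j] P_props(4)[OF x j] by (simp add: D_eq)
    finally show ?thesis .
  qed
  moreover have "degree (D x - A x) \<le> g + 1"
    unfolding D_eq using A_props(3)[OF x] P_props(3)[OF x] by (intro degree_diff_le)
  moreover have "coeff (D x - A x) g = (if odd N then 0 else alpha / 2)"
    "coeff (D x - A x) (g + 1) = 0"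
    using A_props(1,2)[OF x] P_props(1,2)[OF x]
    by (simp_all only: D_eq coeff_diff) (simp_all add: a0coef_def field_simps)
  ultimately have "Bd = D x - A x"
    using Bd(1) by (intro poly_eq_by_nodes[OF x]) simp_all
  with Bd(2) show ?thesis by simp
qed

lemma P_dot_at_node:
  assumes x: "x \<in> S" and j: "j < g"
    and chain: "((\<lambda>y. poly (P y) (lam y j)) has_vector_derivative
      poly Pd (lam x j) + poly (pderiv (P x)) (lam x j) * lam_dot x j) (at x)"
  shows "poly Pd (lam x j) = 0"
proof -
  define l w dl dw where "l = lam x j" and "w = z x j" and "dl = lam_dot x j" and "dw = z_dot x j"
  have w: "w \<noteq> 0" using z_nonzero[OF x j] by (simp add: w_def)
  note z_j = z'[rule_format, OF x j]
  have "((\<lambda>y. poly (P y) (lam y j) * z y j) has_vector_derivative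
      poly (P x) l * dw + (poly Pd l + poly (pderiv (P x)) l * dl) * w) (at x)"
    unfolding l_def w_def dl_def dw_def by (rule has_vector_derivative_mult[OF chain z_j])
  moreover have "((\<lambda>y. z y j * z y j + poly Q (lam y j)) has_vector_derivative
      w * dw + dw * w + dl * poly (pderiv Q) l) (at x)"
    unfolding l_def w_def dl_def dw_def
    using field_vector_diff_chain_at[OF lam'[rule_format, OF x j] poly_DERIV]
    by (intro has_vector_derivative_add has_vector_derivative_mult z_j) (simp add: o_def)
  ultimately have "poly (P x) l * dw + (poly Pd l + poly (pderiv (P x)) l * dl) * w
      = w * dw + dw * w + dl * poly (pderiv Q) l"
  proof (rule vector_derivative_eq_on_open[OF _ _ S x])
    fix y assume y: "y \<in> S"
    then show "poly (P y) (lam y j) * z y j = z y j * z y j + poly Q (lam y j)"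
      using P_props(4)[OF y j] z_nonzero[OF y j] by (simp add: field_simps)
  qed
  \<comment> \<open>The two Hamilton equations make the remaining terms cancel.\<close>
  then have "poly Pd l * w = dw * (w - poly Q l / w) - dl * (w * poly (pderiv (P x)) l - poly (pderiv Q) l)"
    using P_props(4)[OF x j] w by (simp add: l_def w_def field_simps)
  also have "\<dots> = dw * (Bprime_at x j * dl) - dl * (Bprime_at x j * dw)"
    using hamilton_at_nodes[OF x j] by (simp add: l_def w_def dl_def dw_def)
  also have "\<dots> = 0" by simp
  finally show ?thesis using w by (simp add: l_def)
qed

lemma P_derivative:
  assumes x: "x \<in> S"
  shows "has_poly_derivative P (smult alpha (B x)) x"
proof -
  obtain Pd where Pd: "degree Pd \<le> g + 1" "has_poly_derivative P Pd x"
      "\<And>i. ((\<lambda>y. coeff (P y) i) has_vector_derivative coeff Pd i) (at x)"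
      "\<And>s s'. (s has_vector_derivative s') (at x) \<Longrightarrow>
         ((\<lambda>y. poly (P y) (s y)) has_vector_derivative poly Pd (s x) + poly (pderiv (P x)) (s x) * s') (at x)"
    by (rule family_derivative_off_B_roots[OF x P_props(3)]) (use differentiable_poly_P[OF x] in blast)+
  have "coeff Pd (g + 1) = 0"
    by (rule vector_derivative_eq_on_open[OF Pd(3) has_vector_derivative_const S x])
      (rule P_props(2))
  moreover have "coeff Pd g = alpha * b0 x"
    by (rule vector_derivative_eq_on_open[OF Pd(3) has_vector_derivative_I0[OF x] S x])
      (simp add: P_props(1))
  moreover have "poly Pd (lam x j) = 0" if j: "j < g" for j
    by (rule P_dot_at_node[OF x j Pd(4)[OF lam'[rule_format, OF x j]]])
  ultimately have "Pd = smult alpha (B x)"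
    using Pd(1) B_props[OF x]
    by (intro poly_eq_by_nodes[OF x]) (auto simp: coeff_eq_0 intro: order.trans[OF degree_smult_le])
  with Pd(2) show ?thesis by simp
qed

lemma C_at_nodes:
  assumes x: "x \<in> S" and j: "j < g"
  shows "Bprime_at x j * poly (C x) (lam x j)
    = poly (pderiv (A x)) (lam x j) * (poly Q (lam x j) / z x j)
      + z x j * (poly (pderiv (P x)) (lam x j) - poly (pderiv (A x)) (lam x j)) - poly (pderiv Q) (lam x j)"
proof -
  have "pderiv (B x * C x) = pderiv (A x * D x - Q)" using B_mult_C[OF x] by simp
  then have "poly (pderiv (B x) * C x + B x * pderiv (C x)) (lam x j)
      = poly (pderiv (A x) * D x + A x * pderiv (D x) - pderiv Q) (lam x j)"
    by (simp only: pderiv_mult pderiv_diff mult.commute add.commute)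
  then show ?thesis
    using B_props(4,5)[OF x j] A_props(4)[OF x j] P_props(4)[OF x j]
    by (simp add: D_eq pderiv_diff)
qed

lemma u1_mult_b0:
  assumes x: "x \<in> S"
  shows "u1 x * b0 x = - vector_derivative (\<lambda>y. coeff (A y) g) (at x) + coeff (C x) g - coeff (B x) (g - 1)"
  using b0_nonzero[OF x] by (cases "odd N") (simp_all add: u1x_def b0fun_def)

lemma A_dot_at_node:
  assumes x: "x \<in> S" and j: "j < g"
    and chain: "((\<lambda>y. poly (A y) (lam y j)) has_vector_derivative
      poly Ad (lam x j) + poly (pderiv (A x)) (lam x j) * lam_dot x j) (at x)"
  shows "poly Ad (lam x j) = poly (C x) (lam x j)"
proof -
  have "poly Ad (lam x j) + poly (pderiv (A x)) (lam x j) * lam_dot x j = z_dot x j"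
    by (rule vector_derivative_eq_on_open[OF chain z'[rule_format, OF x j] S x]) (rule A_props(4)[OF _ j])
  then have Ad: "poly Ad (lam x j) = z_dot x j - poly (pderiv (A x)) (lam x j) * lam_dot x j"
    by (simp only: eq_diff_eq)
  have "Bprime_at x j * poly Ad (lam x j)
      = Bprime_at x j * z_dot x j - poly (pderiv (A x)) (lam x j) * (Bprime_at x j * lam_dot x j)"
    by (subst Ad) (simp add: algebra_simps)
  also have "\<dots> = Bprime_at x j * poly (C x) (lam x j)"
    unfolding C_at_nodes[OF x j] hamilton_at_nodes[OF x j] by (simp add: algebra_simps)
  finally show ?thesis using Bprime_at_nonzero[OF x j] by simp
qed

lemma A_derivative:
  assumes x: "x \<in> S"
  shows "has_poly_derivative A (C x - B x * [:u1 x, 1:]) x"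
proof -
  obtain Ad where Ad: "degree Ad \<le> g + 1" "has_poly_derivative A Ad x"
      "\<And>i. ((\<lambda>y. coeff (A y) i) has_vector_derivative coeff Ad i) (at x)"
      "\<And>s s'. (s has_vector_derivative s') (at x) \<Longrightarrow>
         ((\<lambda>y. poly (A y) (s y)) has_vector_derivative poly Ad (s x) + poly (pderiv (A x)) (s x) * s') (at x)"
    by (rule family_derivative_off_B_roots[OF x A_props(3)]) (use differentiable_poly_A[OF x] in blast)+
  have BU: "B x * [:u1 x, 1:] = smult (u1 x) (B x) + pCons 0 (B x)"
    by (simp add: mult_pCons_right)
  obtain g' where g': "g = Suc g'" using g1 by (cases g) auto
  have "coeff Ad (g + 1) = 0"
    by (rule vector_derivative_eq_on_open[OF Ad(3) has_vector_derivative_const S x]) (rule A_props(2))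
  also have "\<dots> = coeff (C x - B x * [:u1 x, 1:]) (g + 1)"
    using C_top(2)[OF x] B_props(1,2)[OF x] by (simp add: BU coeff_eq_0)
  finally have top1: "coeff Ad (g + 1) = coeff (C x - B x * [:u1 x, 1:]) (g + 1)" .
  have "coeff Ad g = vector_derivative (\<lambda>y. coeff (A y) g) (at x)"
    using Ad(3) vector_derivative_at by metis
  also have "\<dots> = coeff (C x - B x * [:u1 x, 1:]) g"
    using u1_mult_b0[OF x] B_props(2)[OF x] by (simp add: BU g' mult.commute)
  finally have top0: "coeff Ad g = coeff (C x - B x * [:u1 x, 1:]) g" .
  have nodes: "poly Ad (lam x j) = poly (C x - B x * [:u1 x, 1:]) (lam x j)" if j: "j < g" for j
    using A_dot_at_node[OF x j Ad(4)[OF lam'[rule_format, OF x j]]] B_props(4)[OF x j] by simp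
  have "degree (C x - B x * [:u1 x, 1:]) \<le> g + 1"
    using C_top(1)[OF x] B_props(1)[OF x] degree_mult_le[of "B x" "[:u1 x, 1:]"]
    by (intro degree_diff_le) auto
  then have "Ad = C x - B x * [:u1 x, 1:]"
    using poly_eq_by_nodes[OF x Ad(1) _ top0 top1 nodes] by blast
  with Ad(2) show ?thesis by simp
qed

lemma D_derivative:
  assumes x: "x \<in> S"
  shows "has_poly_derivative D (smult alpha (B x) - (C x - B x * [:u1 x, 1:])) x"
proof -
  have "D = (\<lambda>y. P y - A y)" by (rule ext) (rule D_eq)
  then show ?thesis
    using has_poly_derivative_diff[OF P_derivative[OF x] A_derivative[OF x]] by simp
qed

lemma C_derivative:
  assumes x: "x \<in> S"
  shows "has_poly_derivative C (smult alpha (A x) + (A x - D x) * [:u1 x, 1:]) x"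
proof -
  obtain Cd where Cd: "has_poly_derivative C Cd x"
    by (rule family_derivative_off_B_roots[OF x C_top(1)]) (use differentiable_poly_C[OF x] in blast)+
  have "has_poly_derivative (\<lambda>y. B y * C y) (B x * Cd + (D x - A x) * C x) x"
    by (rule has_poly_derivative_mult[OF B_derivative[OF x] Cd])
  then have "has_poly_derivative (\<lambda>y. A y * D y - Q) (B x * Cd + (D x - A x) * C x) x"
    by (rule has_poly_derivative_transform_within_open[OF _ S x]) (rule B_mult_C)
  moreover have "has_poly_derivative (\<lambda>y. A y * D y - Q)
      (A x * (smult alpha (B x) - (C x - B x * [:u1 x, 1:])) + (C x - B x * [:u1 x, 1:]) * D x - 0) x"
    by (intro has_poly_derivative_diff has_poly_derivative_mult A_derivative D_derivative
        has_poly_derivative_const x)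
  ultimately have "B x * Cd + (D x - A x) * C x
      = A x * (smult alpha (B x) - (C x - B x * [:u1 x, 1:])) + (C x - B x * [:u1 x, 1:]) * D x"
    using has_poly_derivative_unique by fastforce
  then have "B x * Cd = B x * (smult alpha (A x) + (A x - D x) * [:u1 x, 1:])"
    by (simp add: algebra_simps)
  then show ?thesis using Cd B_props(3)[OF x] by simp
qed

end

theorem mainTheorem3:
  fixes N g :: nat and al :: "nat \<Rightarrow> complex" and v :: "real \<Rightarrow> complex"
    and lam z :: "real \<Rightarrow> nat \<Rightarrow> complex" and S :: "real set"
  assumes Ng: "N = 2*g + 1 \<or> N = 2*g + 2" and g1: "g \<ge> 1"
    and S: "open S"
    and v': "\<forall>x\<in>S. (v has_vector_derivative alpha_tot N al / 2) (at x)"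
    and b0nz: "even N \<longrightarrow> (\<forall>x\<in>S. v x \<noteq> 0)"
    and dist: "\<forall>x\<in>S. \<forall>j<g. \<forall>k<g. j \<noteq> k \<longrightarrow> lam x j \<noteq> lam x k"
    and lnz: "\<forall>x\<in>S. \<forall>j<g. lam x j \<noteq> 0"
    and znz: "\<forall>x\<in>S. \<forall>j<g. z x j \<noteq> 0"
    and lam': "\<forall>x\<in>S. \<forall>j<g. ((\<lambda>y. lam y j) has_vector_derivative
        z x j * dH_dz N g al (b0fun N (v x)) (I0fun N g al (v x)) (lam x) (z x) j) (at x)"
    and z': "\<forall>x\<in>S. \<forall>j<g. ((\<lambda>y. z y j) has_vector_derivative
        - z x j * dH_dlam N g al (b0fun N (v x)) (I0fun N g al (v x)) (lam x) (z x) j) (at x)"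
  shows "\<forall>x\<in>S.
     Bx N g v lam x dvd (Ax N g al v lam z x * Dx N g al v lam z x - Qpoly N al)
   \<and> degree (Cx N g al v lam z x) \<le> g + 1
   \<and> (\<forall>\<mu>::complex.
        ((\<lambda>y. poly (Ax N g al v lam z y) \<mu>) has_vector_derivative
           poly (Cx N g al v lam z x) \<mu> - poly (Bx N g v lam x) \<mu> * (\<mu> + u1x N g al v lam z x)) (at x)
      \<and> ((\<lambda>y. poly (Bx N g v lam y) \<mu>) has_vector_derivative
           poly (Dx N g al v lam z x) \<mu> - poly (Ax N g al v lam z x) \<mu>) (at x)
      \<and> ((\<lambda>y. poly (Cx N g al v lam z y) \<mu>) has_vector_derivative
           (\<mu> + alpha_tot N al + u1x N g al v lam z x) * poly (Ax N g al v lam z x) \<mu>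
           - poly (Dx N g al v lam z x) \<mu> * (\<mu> + u1x N g al v lam z x)) (at x)
      \<and> ((\<lambda>y. poly (Dx N g al v lam z y) \<mu>) has_vector_derivative
           (\<mu> + alpha_tot N al + u1x N g al v lam z x) * poly (Bx N g v lam x) \<mu>
           - poly (Cx N g al v lam z x) \<mu>) (at x))"
proof -
  interpret dressing_chain_flow N g al v lam z S
    using Ng g1 S v' b0nz dist znz lam' z' by unfold_locales
  show ?thesis
  proof (intro ballI conjI allI)
    fix x \<mu> assume x: "x \<in> S"
    show "B x dvd A x * D x - Q" by (rule B_dvd_AD_minus_Q[OF x])
    show "degree (C x) \<le> g + 1" by (rule C_top(1)[OF x])
    show "((\<lambda>y. poly (A y) \<mu>) has_vector_derivative poly (C x) \<mu> - poly (B x) \<mu> * (\<mu> + u1 x)) (at x)"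
      using A_derivative[OF x] by (simp add: has_poly_derivative_def algebra_simps)
    show "((\<lambda>y. poly (B y) \<mu>) has_vector_derivative poly (D x) \<mu> - poly (A x) \<mu>) (at x)"
      using B_derivative[OF x] by (simp add: has_poly_derivative_def)
    show "((\<lambda>y. poly (C y) \<mu>) has_vector_derivative
        (\<mu> + alpha + u1 x) * poly (A x) \<mu> - poly (D x) \<mu> * (\<mu> + u1 x)) (at x)"
      using C_derivative[OF x] by (simp add: has_poly_derivative_def algebra_simps)
    show "((\<lambda>y. poly (D y) \<mu>) has_vector_derivative (\<mu> + alpha + u1 x) * poly (B x) \<mu> - poly (C x) \<mu>) (at x)"
      using D_derivative[OF x] by (simp add: has_poly_derivative_def algebra_simps)
  qed
qed

end
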